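(* Let $G=(V,E)$ be a hypergraph (that is, $E$ is a collection of subsets of $V$, each of cardinality $\ge 2$). Then \begin{equation} \exp \Biggl( \sum_{A \in E} w_A f_A^{(\lambda)} \Biggr) \;= \!\! \sum_{\substack{ F\in \mathcal{F}(G) \\ F = (F_1,\ldots,F_{\ell})}} \!\! \Biggl( \prod\limits_{A \in F} w_A \Biggr) \, \prod_{\alpha=1}^{\ell} f_{V(F_\alpha)}^{(\lambda)} \end{equation} where the sum runs over spanning hyperforests $F$ in $G$ with components $F_1,\ldots, F_{\ell}$, and $V(F_\alpha)$ is the vertex set of the hypertree $F_\alpha$. More generally, \begin{equation} \exp \Biggl( \sum_{A \in E} w_A f_A^{(\lambda_A)} \Biggr) \;= \!\! \sum_{\substack{ F\in \mathcal{F}(G) \\ F = (F_1,\ldots, F_{\ell})}} \!\! \Biggl( \prod\limits_{A \in F} w_A \Biggr) \, \prod_{\alpha=1}^{\ell} f_{V(F_\alpha)}^{(\lambda_\alpha)} \end{equation} where $\lambda_\alpha$ is the weighted average $\lambda_\alpha = \sum_{A} (|A|-1)\lambda_A \big/ \sum_{A}(|A|-1)$, both sums taken over the hyperedges $A$ contained in the hypertree $F_\alpha$ (equivalently the denominator is $|V(F_\alpha)|-1$).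
   Context: $V$ is a finite set; for each $i\in V$ there is a pair $\psi_i,{\bar{\psi}}_i$ of generators of a Grassmann algebra. For $A\subseteq V$, $\tau_A=\prod_{i\in A}{\bar{\psi}}_i\psi_i$ (with $\tau_\emptyset=1$), and for a number $\lambda$, $f_A^{(\lambda)} = \lambda (1-|A|) \tau_A + \sum_{i \in A} \tau_{A \smallsetminus i} - \sum_{i,j \in A,\, i \neq j} {\bar{\psi}}_i \psi_j \tau_{A \smallsetminus \{i,j\}}$. $\mathcal{F}(G)$ denotes the set of spanning hyperforests of $G$ (spanning subhypergraphs with no cycles), identified with their hyperedge sets. The $w_A$ are arbitrary hyperedge weights and $\lambda_A$ arbitrary numbers attached to hyperedges. *)

theory Defs
  imports Complex_Main "HOL-Library.Function_Algebras" "HOL-Library.Product_Lexorder"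
begin

text \<open>Grassmann algebra over the reals with generators psi_i = (i,True) and
  psibar_i = (i,False), i ranging over a linearly ordered type 'v.
  An element is given by its coefficient function on (finite) sets of generators;
  the monomial of a finite set S of generators is the product of its generators in
  increasing order.  Addition (and finite sums, negation, subtraction) are pointwise
  (from Function_Algebras); the Grassmann product is gmul (NOT the pointwise times).\<close>

type_synonym 'v grass = "('v \<times> bool) set \<Rightarrow> real"

definition gsign :: "('v::linorder \<times> bool) set \<Rightarrow> ('v \<times> bool) set \<Rightarrow> real" where
  "gsign T U = (-1) ^ card {(t, u). t \<in> T \<and> u \<in> U \<and> u < t}"

definition gmul :: "'v::linorder grass \<Rightarrow> 'v grass \<Rightarrow> 'v grass" (infixl "\<odot>" 70) where
  "gmul x y = (\<lambda>S. if finite S then (\<Sum>T\<in>Pow S. gsign T (S - T) * x T * y (S - T)) else 0)"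

definition gone :: "'v grass" where
  "gone = (\<lambda>S. if S = {} then 1 else 0)"

definition gscale :: "real \<Rightarrow> 'v grass \<Rightarrow> 'v grass" where
  "gscale c x = (\<lambda>S. c * x S)"

definition gen :: "'v \<times> bool \<Rightarrow> 'v grass" where
  "gen g = (\<lambda>S. if S = {g} then 1 else 0)"

definition psi :: "'v \<Rightarrow> 'v grass" where
  "psi i = gen (i, True)"

definition psibar :: "'v \<Rightarrow> 'v grass" where
  "psibar i = gen (i, False)"

primrec gpow :: "'v::linorder grass \<Rightarrow> nat \<Rightarrow> 'v grass" where
  "gpow x 0 = gone"
| "gpow x (Suc n) = x \<odot> gpow x n"

definition gprod_list :: "'v::linorder grass list \<Rightarrow> 'v grass" where
  "gprod_list xs = foldr gmul xs gone"

text \<open>Product over a finite index set (taken in some enumeration; for pairwise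
  commuting (e.g. even) factors this does not depend on the enumeration).\<close>
definition gprod_set :: "'b set \<Rightarrow> ('b \<Rightarrow> 'v::linorder grass) \<Rightarrow> 'v grass" where
  "gprod_set S f = gprod_list (map f (SOME xs. distinct xs \<and> set xs = S))"

text \<open>On the coefficient of a finite set S only the terms
  n <= card S contribute, so the series is truncated exactly there.\<close>
definition gexp :: "'v::linorder grass \<Rightarrow> 'v grass" where
  "gexp x = (\<lambda>S. exp (x {}) *
      (\<Sum>n\<le>card S. gpow (x - gscale (x {}) gone) n S / fact n))"

definition tau :: "'v::linorder set \<Rightarrow> 'v grass" where
  "tau A = gprod_list (map (\<lambda>i. psibar i \<odot> psi i) (sorted_list_of_set A))"

definition fA :: "real \<Rightarrow> 'v::linorder set \<Rightarrow> 'v grass" where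
  "fA lam A =
     gscale (lam * (1 - real (card A))) (tau A)
     + (\<Sum>i\<in>A. tau (A - {i}))
     - (\<Sum>i\<in>A. \<Sum>j\<in>A - {i}. psibar i \<odot> psi j \<odot> tau (A - {i, j}))"

definition hcycle :: "'v set set \<Rightarrow> 'v list \<Rightarrow> 'v set list \<Rightarrow> bool" where
  "hcycle F xs es \<longleftrightarrow> length xs = length es \<and> 2 \<le> length xs \<and> distinct xs \<and> distinct es
     \<and> set es \<subseteq> F
     \<and> (\<forall>i<length xs. xs ! i \<in> es ! i \<and> xs ! ((i + 1) mod length xs) \<in> es ! i)"

definition hyperforest :: "'v set set \<Rightarrow> bool" where
  "hyperforest F \<longleftrightarrow> \<not> (\<exists>xs es. hcycle F xs es)"

text \<open>Spanning hyperforests of G = (V,E), identified with their hyperedge sets.\<close>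
definition spanning_hyperforests :: "'v set set \<Rightarrow> 'v set set set" where
  "spanning_hyperforests E = {F. F \<subseteq> E \<and> hyperforest F}"

definition hconn :: "'v set set \<Rightarrow> ('v \<times> 'v) set" where
  "hconn F = {(x, y). \<exists>A\<in>F. x \<in> A \<and> y \<in> A}\<^sup>*"

definition components :: "'v set \<Rightarrow> 'v set set \<Rightarrow> 'v set set" where
  "components V F = V // hconn F"

definition lam_avg :: "('v set \<Rightarrow> real) \<Rightarrow> 'v set set \<Rightarrow> 'v set \<Rightarrow> real" where
  "lam_avg lam F C =
     (\<Sum>A\<in>{A\<in>F. A \<subseteq> C}. (real (card A) - 1) * lam A)
       / (\<Sum>A\<in>{A\<in>F. A \<subseteq> C}. (real (card A) - 1))"

end

theory Submission
  imports Defs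
begin

text \<open>All computations take place in the commutative ring of even, finitely supported
  Grassmann elements, where the exponential of an element without constant term is a finite
  power series.  Write \<open>h\<^sub>c(A)\<close> for \<open>f\<^sub>A\<close> with the parameter entering as \<open>c = \<lambda>(|A| - 1)\<close>.
  Two identities drive the proof: \<open>h\<^sub>c(A) h\<^sub>d(B) = h\<^sub>c\<^sub>+\<^sub>d(A \<union> B)\<close> if \<open>|A \<inter> B| = 1\<close>, and
  \<open>h\<^sub>c(A) h\<^sub>d(B) = 0\<close> if \<open>|A \<inter> B| \<ge> 2\<close>.  Hence every \<open>w\<^sub>A h(A)\<close> squares to zero and the
  exponential of the sum is \<open>\<Prod>\<^sub>A (1 + w\<^sub>A h(A))\<close>.  Expanding this product hyperedge by
  hyperedge, multiplying the product of the factors of the components of a hyperforest \<open>F\<close>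
  by \<open>h(B)\<close> merges the components met by \<open>B\<close> when \<open>F \<union> {B}\<close> is again a hyperforest, and
  gives zero otherwise, because then \<open>B\<close> has two vertices in one component.  Parameters add
  up under merging, so a component \<open>C\<close> carries \<open>\<Sum>\<^sub>A\<^sub>\<subseteq>\<^sub>C \<lambda>\<^sub>A(|A| - 1) = \<lambda>\<^sub>C(|C| - 1)\<close>.\<close>

section \<open>The Grassmann product\<close>

lemma sum_fun_apply: "(\<Sum>i\<in>A. f i) x = (\<Sum>i\<in>A. f i x)"
  by (induction A rule: infinite_finite_induct) auto

definition inversions :: "('v::linorder \<times> bool) set \<Rightarrow> ('v \<times> bool) set \<Rightarrow> (('v \<times> bool) \<times> ('v \<times> bool)) set" where
  "inversions T U = {(t, u). t \<in> T \<and> u \<in> U \<and> u < t}"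

lemma gsign_inversions: "gsign T U = (-1) ^ card (inversions T U)"
  by (simp add: gsign_def inversions_def)

lemma finite_inversions: "finite T \<Longrightarrow> finite U \<Longrightarrow> finite (inversions T U)"
  by (rule finite_subset[of _ "T \<times> U"]) (auto simp: inversions_def)

lemma gsign_Un_left:
  assumes "finite T" "finite U" "finite W" "T \<inter> U = {}"
  shows "gsign (T \<union> U) W = gsign T W * gsign U W"
proof -
  have "inversions (T \<union> U) W = inversions T W \<union> inversions U W" by (auto simp: inversions_def)
  moreover have "inversions T W \<inter> inversions U W = {}" using assms(4) by (auto simp: inversions_def)
  ultimately have "card (inversions (T \<union> U) W) = card (inversions T W) + card (inversions U W)"
    using assms by (simp add: card_Un_disjoint finite_inversions)
  then show ?thesis by (simp add: gsign_inversions power_add)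
qed

lemma gsign_Un_right:
  assumes "finite T" "finite U" "finite W" "U \<inter> W = {}"
  shows "gsign T (U \<union> W) = gsign T U * gsign T W"
proof -
  have "inversions T (U \<union> W) = inversions T U \<union> inversions T W" by (auto simp: inversions_def)
  moreover have "inversions T U \<inter> inversions T W = {}" using assms(4) unfolding inversions_def by blast
  ultimately have "card (inversions T (U \<union> W)) = card (inversions T U) + card (inversions T W)"
    using assms by (simp add: card_Un_disjoint finite_inversions)
  then show ?thesis by (simp add: gsign_inversions power_add)
qed

lemma gsign_swap:
  assumes "finite T" "finite U" "T \<inter> U = {}"
  shows "gsign U T = (-1) ^ (card T * card U) * gsign T U"
proof -
  let ?B = "{(t, u). t \<in> T \<and> u \<in> U \<and> t < u}"
  have "card (inversions U T) = card ?B"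
    by (rule bij_betw_same_card[of "\<lambda>(u,t). (t,u)"])
      (auto simp: inversions_def bij_betw_def inj_on_def image_def)
  moreover have "T \<times> U = inversions T U \<union> ?B"
  proof -
    have "\<And>t u. t \<in> T \<Longrightarrow> u \<in> U \<Longrightarrow> u < t \<or> t < u"
      using assms(3) by (metis disjoint_iff neqE)
    then show ?thesis unfolding inversions_def by auto
  qed
  moreover have "inversions T U \<inter> ?B = {}" by (auto simp: inversions_def)
  moreover have "finite ?B" by (rule finite_subset[of _ "T \<times> U"]) (use assms in auto)
  ultimately have "card (T \<times> U) = card (inversions T U) + card (inversions U T)"
    using assms by (simp add: card_Un_disjoint finite_inversions)
  then have "(-1::real) ^ (card T * card U) = gsign T U * gsign U T"
    by (simp add: gsign_inversions power_add card_cartesian_product)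
  moreover have "gsign T U * gsign T U = 1"
    unfolding gsign_def by (simp flip: power_mult_distrib)
  ultimately show ?thesis by (metis mult.assoc mult.commute mult_1_right)
qed

lemma gmul_apply: "finite S \<Longrightarrow> (x \<odot> y) S = (\<Sum>T\<in>Pow S. gsign T (S - T) * x T * y (S - T))"
  by (simp add: gmul_def)

lemma gmul_infinite: "infinite S \<Longrightarrow> (x \<odot> y) S = 0"
  by (simp add: gmul_def)

text \<open>Both bracketings of a triple product expand into the same sum over ordered
  decompositions \<open>S = T \<union> U \<union> (S - T - U)\<close>.\<close>

lemma gmul_gmul_left_apply:
  assumes fin: "finite S"
  shows "((x \<odot> y) \<odot> z) S = (\<Sum>(T, U)\<in>Sigma (Pow S) (\<lambda>T. Pow (S - T)).
    gsign T U * gsign T (S - T - U) * gsign U (S - T - U) * x T * y U * z (S - T - U))"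
    (is "_ = sum ?g ?Q")
proof -
  have "((x \<odot> y) \<odot> z) S = (\<Sum>T\<in>Pow S. \<Sum>T1\<in>Pow T.
      gsign T (S - T) * (gsign T1 (T - T1) * x T1 * y (T - T1)) * z (S - T))"
    using fin by (simp add: gmul_apply finite_subset sum_distrib_left sum_distrib_right)
  also have "\<dots> = (\<Sum>(T, T1)\<in>Sigma (Pow S) Pow.
      gsign T (S - T) * (gsign T1 (T - T1) * x T1 * y (T - T1)) * z (S - T))"
    using fin by (subst sum.Sigma) (auto intro: finite_subset)
  also have "\<dots> = sum ?g ?Q"
  proof (rule sum.reindex_bij_witness[of _ "\<lambda>(T1, U). (T1 \<union> U, T1)" "\<lambda>(T, T1). (T1, T - T1)"])
    fix a assume "a \<in> Sigma (Pow S) Pow"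
    then obtain T T1 where a: "a = (T, T1)" "T \<subseteq> S" "T1 \<subseteq> T" by auto
    define U where "U = T - T1"
    have fin_parts: "finite T1" "finite U" "finite (S - T1 - U)"
      using a fin by (auto intro: finite_subset simp: U_def)
    have T_split: "T = T1 \<union> U" using a by (auto simp: U_def)
    have "gsign T (S - T1 - U) = gsign T1 (S - T1 - U) * gsign U (S - T1 - U)"
      unfolding T_split using fin_parts by (intro gsign_Un_left) (auto simp: U_def)
    moreover have "S - T = S - T1 - U" using a by (auto simp: U_def)
    ultimately show "?g (case a of (T, T1) \<Rightarrow> (T1, T - T1)) = (case a of (T, T1) \<Rightarrow>
        gsign T (S - T) * (gsign T1 (T - T1) * x T1 * y (T - T1)) * z (S - T))"
      using a by (simp add: U_def[symmetric] algebra_simps)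
  qed auto
  finally show ?thesis .
qed

lemma gmul_gmul_right_apply:
  assumes fin: "finite S"
  shows "(x \<odot> (y \<odot> z)) S = (\<Sum>(T, U)\<in>Sigma (Pow S) (\<lambda>T. Pow (S - T)).
    gsign T U * gsign T (S - T - U) * gsign U (S - T - U) * x T * y U * z (S - T - U))"
proof -
  have "(x \<odot> (y \<odot> z)) S = (\<Sum>(T, U)\<in>Sigma (Pow S) (\<lambda>T. Pow (S - T)).
      gsign T (S - T) * x T * (gsign U (S - T - U) * y U * z (S - T - U)))"
    using fin by (simp add: gmul_apply sum_distrib_left sum.Sigma finite_subset)
  also have "\<dots> = (\<Sum>(T, U)\<in>Sigma (Pow S) (\<lambda>T. Pow (S - T)).
      gsign T U * gsign T (S - T - U) * gsign U (S - T - U) * x T * y U * z (S - T - U))"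
  proof (rule sum.cong[OF refl], clarify)
    fix T U assume TU: "T \<subseteq> S" "U \<subseteq> S - T"
    have "S - T = U \<union> (S - T - U)" using TU by auto
    then have "gsign T (S - T) = gsign T U * gsign T (S - T - U)"
      using TU fin by (metis Diff_disjoint gsign_Un_right finite_Diff finite_subset)
    then show "gsign T (S - T) * x T * (gsign U (S - T - U) * y U * z (S - T - U))
        = gsign T U * gsign T (S - T - U) * gsign U (S - T - U) * x T * y U * z (S - T - U)"
      by (simp add: algebra_simps)
  qed
  finally show ?thesis .
qed

lemma gmul_assoc: "(x \<odot> y) \<odot> z = x \<odot> (y \<odot> z)"
proof
  fix S :: "('a \<times> bool) set"
  show "((x \<odot> y) \<odot> z) S = (x \<odot> (y \<odot> z)) S"
    by (cases "finite S") (simp_all add: gmul_gmul_left_apply gmul_gmul_right_apply gmul_infinite)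
qed

lemma gmul_add_left: "(x + y) \<odot> z = x \<odot> z + y \<odot> z"
  by (rule ext) (simp add: gmul_def sum.distrib algebra_simps)
lemma gmul_zero_left[simp]: "0 \<odot> z = 0"
  by (rule ext) (simp add: gmul_def)
lemma gmul_zero_right[simp]: "z \<odot> 0 = 0"
  by (rule ext) (simp add: gmul_def)
lemma gmul_uminus_left: "(- x) \<odot> z = - (x \<odot> z)"
  by (rule ext) (simp add: gmul_def sum_negf)
lemma gmul_uminus_right: "z \<odot> (- x) = - (z \<odot> x)"
  by (rule ext) (simp add: gmul_def sum_negf)
lemma gmul_gscale_left: "gscale c x \<odot> z = gscale c (x \<odot> z)"
  by (rule ext) (simp add: gmul_def gscale_def sum_distrib_left algebra_simps)
lemma gmul_gscale_right: "z \<odot> gscale c x = gscale c (z \<odot> x)"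
  by (rule ext) (simp add: gmul_def gscale_def sum_distrib_left algebra_simps)

section \<open>The ring of even elements\<close>

definition gfinite :: "'v grass \<Rightarrow> bool" where
  "gfinite x \<longleftrightarrow> (\<forall>S. infinite S \<longrightarrow> x S = 0)"

definition geven :: "'v grass \<Rightarrow> bool" where
  "geven x \<longleftrightarrow> (\<forall>S. odd (card S) \<longrightarrow> x S = 0)"

lemma gone_gmul: "gfinite x \<Longrightarrow> gone \<odot> x = x"
proof (rule ext)
  fix S assume g: "gfinite x"
  show "(gone \<odot> x) S = x S"
  proof (cases "finite S")
    case True
    have "(gone \<odot> x) S = (\<Sum>T\<in>Pow S. gsign T (S - T) * gone T * x (S - T))"
      using True by (simp add: gmul_def)
    also have "\<dots> = (\<Sum>T\<in>Pow S. if T = {} then x S else 0)"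
      by (rule sum.cong) (auto simp: gone_def gsign_def)
    also have "\<dots> = x S" using True by (simp add: sum.delta')
    finally show ?thesis .
  qed (use g in \<open>simp add: gfinite_def gmul_def\<close>)
qed

lemma gmul_comm_even:
  assumes "geven x"
  shows "y \<odot> x = x \<odot> y"
proof (rule ext)
  fix S
  show "(y \<odot> x) S = (x \<odot> y) S"
  proof (cases "finite S")
    case fin: True
    have "(y \<odot> x) S = (\<Sum>U\<in>Pow S. gsign (S - U) U * y (S - U) * x U)"
      unfolding gmul_apply[OF fin]
      by (rule sum.reindex_bij_witness[of _ "\<lambda>U. S - U" "\<lambda>U. S - U"]) (auto simp: Diff_Diff_Int Int_absorb1)
    also have "\<dots> = (\<Sum>U\<in>Pow S. gsign U (S - U) * x U * y (S - U))"
    proof (rule sum.cong[OF refl])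
      fix U assume U: "U \<in> Pow S"
      show "gsign (S - U) U * y (S - U) * x U = gsign U (S - U) * x U * y (S - U)"
      proof (cases "x U = 0")
        case False
        then have "even (card U)" using assms unfolding geven_def by blast
        moreover have "gsign (S - U) U = (-1) ^ (card U * card (S - U)) * gsign U (S - U)"
          using U fin by (intro gsign_swap) (auto intro: finite_subset)
        ultimately show ?thesis by simp
      qed simp
    qed
    also have "\<dots> = (x \<odot> y) S" using fin by (simp add: gmul_def)
    finally show ?thesis .
  qed (simp add: gmul_def)
qed

lemma gen_gmul_gen:
  "gen a \<odot> gen b = (\<lambda>S. if a \<noteq> b \<and> S = {a, b} then (if b < a then -1 else 1) else 0)"
proof (rule ext)
  fix S
  show "(gen a \<odot> gen b) S = (if a \<noteq> b \<and> S = {a, b} then (if b < a then -1 else 1) else 0)"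
  proof (cases "finite S")
    case fin: True
    have "(gen a \<odot> gen b) S = (\<Sum>T\<in>Pow S. gsign T (S - T) * gen a T * gen b (S - T))"
      using fin by (simp add: gmul_def)
    also have "\<dots> = (\<Sum>T\<in>Pow S. if T = {a} then gsign {a} (S - {a}) * gen b (S - {a}) else 0)"
      by (rule sum.cong) (simp_all add: gen_def)
    also have "\<dots> = (if {a} \<in> Pow S then gsign {a} (S - {a}) * gen b (S - {a}) else 0)"
      using fin by (intro sum.delta) simp
    also have "\<dots> = (if a \<noteq> b \<and> S = {a, b} then (if b < a then -1 else 1) else 0)"
    proof (cases "a \<noteq> b \<and> S = {a, b}")
      case True
      then have "S - {a} = {b}" by auto
      moreover have "{(t, u). t \<in> {a} \<and> u \<in> {b} \<and> u < t} = (if b < a then {(a, b)} else {})"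
        by auto
      ultimately show ?thesis using True by (simp add: gen_def gsign_def)
    next
      case False
      then have "\<not> ({a} \<subseteq> S \<and> S - {a} = {b})" by auto
      then show ?thesis using False by (auto simp add: gen_def)
    qed
    finally show ?thesis .
  qed (auto simp add: gmul_def)
qed

lemma gen_anticomm: "gen a \<odot> gen b = - (gen b \<odot> gen a)"
proof (rule ext)
  fix S
  show "(gen a \<odot> gen b) S = (- (gen b \<odot> gen a)) S"
  proof (cases "a = b")
    case False
    then have "b < a \<longleftrightarrow> \<not> a < b" by auto
    then show ?thesis using False by (simp add: gen_gmul_gen insert_commute)
  qed (simp add: gen_gmul_gen)
qed

lemma gen_square: "gen a \<odot> gen a = 0"
  by (rule ext) (simp add: gen_gmul_gen)

lemma gfinite_gmul: "gfinite (x \<odot> y)"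
  by (simp add: gfinite_def gmul_def)

lemma geven_gmul:
  assumes "geven x" "geven y"
  shows "geven (x \<odot> y)"
  unfolding geven_def
proof (intro allI impI)
  fix S :: "('a \<times> bool) set" assume odd: "odd (card S)"
  show "(x \<odot> y) S = 0"
  proof (cases "finite S")
    case fin: True
    have "gsign T (S - T) * x T * y (S - T) = 0" if T: "T \<in> Pow S" for T
    proof -
      have "card S = card T + card (S - T)"
        using T fin by (metis PowD card_Diff_subset finite_subset le_add_diff_inverse card_mono)
      then have "odd (card T) \<or> odd (card (S - T))" using odd by auto
      then show ?thesis using assms by (auto simp: geven_def)
    qed
    then show ?thesis using fin by (simp add: gmul_apply sum.neutral)
  qed (simp add: gmul_def)
qed

typedef (overloaded) 'v grass_even = "{x :: 'v::linorder grass. gfinite x \<and> geven x}"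
  morphisms grass_of Abs_grass_even
  by (rule exI[of _ 0]) (simp add: gfinite_def geven_def)

setup_lifting type_definition_grass_even

lemma gfinite_gone: "gfinite gone" and geven_gone: "geven gone"
  by (auto simp: gfinite_def geven_def gone_def)

instantiation grass_even :: (linorder) comm_ring_1
begin
lift_definition zero_grass_even :: "'a grass_even" is 0
  by (simp add: gfinite_def geven_def)
lift_definition one_grass_even :: "'a grass_even" is gone
  by (simp add: gfinite_gone geven_gone)
lift_definition plus_grass_even :: "'a grass_even \<Rightarrow> 'a grass_even \<Rightarrow> 'a grass_even" is "(+)"
  by (simp add: gfinite_def geven_def)
lift_definition minus_grass_even :: "'a grass_even \<Rightarrow> 'a grass_even \<Rightarrow> 'a grass_even" is "(-)"
  by (simp add: gfinite_def geven_def)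
lift_definition uminus_grass_even :: "'a grass_even \<Rightarrow> 'a grass_even" is "uminus"
  by (simp add: gfinite_def geven_def)
lift_definition times_grass_even :: "'a grass_even \<Rightarrow> 'a grass_even \<Rightarrow> 'a grass_even" is gmul
  by (simp add: gfinite_gmul geven_gmul)
instance
proof
  fix a b c :: "'a grass_even"
  show "a * b * c = a * (b * c)" by transfer (rule gmul_assoc)
  show "a * b = b * a" by transfer (simp add: gmul_comm_even)
  show "1 * a = a" by transfer (simp add: gone_gmul)
  show "(a + b) * c = a * c + b * c" by transfer (rule gmul_add_left)
  show "(0::'a grass_even) \<noteq> 1" by transfer (simp add: fun_eq_iff gone_def exI[of _ "{}"])
  show "a + b + c = a + (b + c)" by transfer (simp add: add.assoc)
  show "a + b = b + a" by transfer (simp add: add.commute)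
  show "0 + a = a" by transfer simp
  show "- a + a = 0" by transfer simp
  show "a - b = a + - b" by transfer simp
qed
end

lemma grass_of_add: "grass_of (x + y) = grass_of x + grass_of y"
  by (rule plus_grass_even.rep_eq)
lemma grass_of_diff: "grass_of (x - y) = grass_of x - grass_of y"
  by (rule minus_grass_even.rep_eq)
lemma grass_of_uminus: "grass_of (- x) = - grass_of x"
  by (rule uminus_grass_even.rep_eq)
lemma grass_of_mult: "grass_of (x * y) = grass_of x \<odot> grass_of y"
  by (rule times_grass_even.rep_eq)

lemma grass_of_sum: "grass_of (\<Sum>i\<in>A. f i) = (\<Sum>i\<in>A. grass_of (f i))"
  by (induction A rule: infinite_finite_induct) (simp_all add: zero_grass_even.rep_eq grass_of_add)

lemma grass_of_prod_list: "grass_of (prod_list (map f xs)) = foldr gmul (map (grass_of \<circ> f) xs) gone"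
  by (induction xs) (simp_all add: one_grass_even.rep_eq grass_of_mult)

lemma gpow_grass_of: "gpow (grass_of s) n = grass_of (s ^ n)"
  by (induction n) (simp_all add: one_grass_even.rep_eq grass_of_mult)

lift_definition scalar :: "real \<Rightarrow> 'a::linorder grass_even" is "\<lambda>c. gscale c gone"
  by (auto simp: gfinite_def geven_def gone_def gscale_def)

lemma scalar_add: "scalar (a + b) = scalar a + scalar b"
  by transfer (auto simp: gscale_def fun_eq_iff algebra_simps)
lemma scalar_mult: "scalar (a * b) = scalar a * scalar b"
  by transfer (simp add: gmul_gscale_left gmul_gscale_right gone_gmul gfinite_gone,
      simp add: gscale_def fun_eq_iff)
lemma scalar_one[simp]: "scalar 1 = 1"
  by transfer (simp add: gscale_def)
lemma scalar_zero[simp]: "scalar 0 = 0"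
  by transfer (simp add: gscale_def fun_eq_iff)
lemma scalar_of_nat: "scalar (real n) = of_nat n"
  by (induction n) (simp_all add: scalar_add)

lemma grass_of_scalar_mult: "grass_of (scalar c * x) = gscale c (grass_of x)"
proof -
  have "gfinite (grass_of x)" using grass_of[of x] by simp
  then show ?thesis by (simp add: grass_of_mult scalar.rep_eq gmul_gscale_left gone_gmul)
qed

lift_definition psibar_psi :: "'a::linorder \<Rightarrow> 'a \<Rightarrow> 'a grass_even" is "\<lambda>i j. psibar i \<odot> psi j"
proof -
  fix i j :: 'a
  have "geven (psibar i \<odot> psi j)"
    by (auto simp: geven_def psibar_def psi_def gen_gmul_gen)
  then show "gfinite (psibar i \<odot> psi j) \<and> geven (psibar i \<odot> psi j)" by (simp add: gfinite_gmul)
qed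

lemma grass_of_psibar_psi: "grass_of (psibar_psi i j) = psibar i \<odot> psi j"
  by (rule psibar_psi.rep_eq)

section \<open>The hyperedge factors\<close>

lemma gen_mult_swap_outer: "gen b \<odot> (gen c \<odot> gen d) = - (gen d \<odot> (gen c \<odot> gen b))"
proof -
  have "gen b \<odot> (gen c \<odot> gen d) = - (gen b \<odot> (gen d \<odot> gen c))"
    by (subst gen_anticomm[of c d]) (simp add: gmul_uminus_right)
  also have "\<dots> = - ((gen b \<odot> gen d) \<odot> gen c)" by (simp add: gmul_assoc)
  also have "\<dots> = (gen d \<odot> gen b) \<odot> gen c"
    by (subst gen_anticomm[of b d]) (simp add: gmul_uminus_left)
  also have "\<dots> = gen d \<odot> (gen b \<odot> gen c)" by (simp add: gmul_assoc)
  also have "\<dots> = - (gen d \<odot> (gen c \<odot> gen b))"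
    by (subst gen_anticomm[of b c]) (simp add: gmul_uminus_right)
  finally show ?thesis .
qed

lemma gen_pairs_exchange: "(gen a \<odot> gen b) \<odot> (gen c \<odot> gen d) = - ((gen a \<odot> gen d) \<odot> (gen c \<odot> gen b))"
proof -
  have "(gen a \<odot> gen b) \<odot> (gen c \<odot> gen d) = gen a \<odot> (gen b \<odot> (gen c \<odot> gen d))"
    by (rule gmul_assoc)
  also have "\<dots> = - (gen a \<odot> (gen d \<odot> (gen c \<odot> gen b)))"
    by (subst gen_mult_swap_outer) (rule gmul_uminus_right)
  also have "\<dots> = - ((gen a \<odot> gen d) \<odot> (gen c \<odot> gen b))"
    by (simp only: gmul_assoc)
  finally show ?thesis .
qed

lemma gen_pairs_same_left: "(gen a \<odot> gen b) \<odot> (gen a \<odot> gen c) = 0"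
proof -
  have "(gen a \<odot> gen b) \<odot> (gen a \<odot> gen c) = gen a \<odot> ((gen b \<odot> gen a) \<odot> gen c)"
    by (simp add: gmul_assoc)
  also have "\<dots> = - (gen a \<odot> ((gen a \<odot> gen b) \<odot> gen c))"
    by (subst gen_anticomm[of b a]) (simp add: gmul_uminus_left gmul_uminus_right)
  also have "\<dots> = - (((gen a \<odot> gen a) \<odot> gen b) \<odot> gen c)"
    by (simp add: gmul_assoc)
  finally show ?thesis by (simp add: gen_square)
qed

lemma gen_pairs_same_right: "(gen a \<odot> gen b) \<odot> (gen c \<odot> gen b) = 0"
proof -
  have "(gen a \<odot> gen b) \<odot> (gen c \<odot> gen b) = gen a \<odot> (gen b \<odot> (gen c \<odot> gen b))"
    by (simp add: gmul_assoc)
  also have "\<dots> = - (gen a \<odot> (gen b \<odot> (gen b \<odot> gen c)))"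
    by (subst gen_anticomm[of c b]) (simp add: gmul_uminus_right)
  also have "\<dots> = - (gen a \<odot> ((gen b \<odot> gen b) \<odot> gen c))"
    by (simp add: gmul_assoc)
  finally show ?thesis by (simp add: gen_square)
qed

lemma psibar_psi_exchange: "psibar_psi i j * psibar_psi k l = - (psibar_psi i l * psibar_psi k j)"
  unfolding psibar_def psi_def by transfer (unfold psibar_def psi_def, rule gen_pairs_exchange)

lemma psibar_psi_same_row: "psibar_psi i j * psibar_psi i l = 0"
  by transfer (simp add: psibar_def psi_def gen_pairs_same_left)

lemma psibar_psi_same_col: "psibar_psi i j * psibar_psi k j = 0"
  by transfer (simp add: psibar_def psi_def gen_pairs_same_right)

definition tau_ev :: "'a::linorder set \<Rightarrow> 'a grass_even" where
  "tau_ev A = (\<Prod>k\<in>A. psibar_psi k k)"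

definition sigma_ev :: "'a::linorder set \<Rightarrow> 'a grass_even" where
  "sigma_ev A = (\<Sum>i\<in>A. tau_ev (A - {i}))"

definition rho_ev :: "'a::linorder set \<Rightarrow> 'a grass_even" where
  "rho_ev A = (\<Sum>i\<in>A. \<Sum>j\<in>A - {i}. psibar_psi i j * tau_ev (A - {i, j}))"

text \<open>\<open>f_ev (scalar (\<lambda> * (|A| - 1))) A\<close> is \<open>fA \<lambda> A\<close>.\<close>

definition f_ev :: "'a::linorder grass_even \<Rightarrow> 'a set \<Rightarrow> 'a grass_even" where
  "f_ev c A = - (c * tau_ev A) + sigma_ev A - rho_ev A"

text \<open>The terms of \<open>rho_ev (insert v A)\<close> with \<open>i = v\<close>, resp. \<open>j = v\<close>.\<close>

definition row_ev :: "'a::linorder \<Rightarrow> 'a set \<Rightarrow> 'a grass_even" where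
  "row_ev v A = (\<Sum>j\<in>A. psibar_psi v j * tau_ev (A - {j}))"

definition col_ev :: "'a::linorder \<Rightarrow> 'a set \<Rightarrow> 'a grass_even" where
  "col_ev v A = (\<Sum>i\<in>A. psibar_psi i v * tau_ev (A - {i}))"

lemma tau_ev_insert: "finite A \<Longrightarrow> v \<notin> A \<Longrightarrow> tau_ev (insert v A) = psibar_psi v v * tau_ev A"
  by (simp add: tau_ev_def)

lemma tau_ev_empty[simp]: "tau_ev {} = 1"
  by (simp add: tau_ev_def)

lemma sigma_ev_insert:
  assumes "finite A" "v \<notin> A"
  shows "sigma_ev (insert v A) = tau_ev A + psibar_psi v v * sigma_ev A"
proof -
  have "sigma_ev (insert v A) = tau_ev (insert v A - {v}) + (\<Sum>i\<in>A. tau_ev (insert v A - {i}))"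
    using assms by (simp add: sigma_ev_def)
  also have "insert v A - {v} = A" using assms by auto
  also have "(\<Sum>i\<in>A. tau_ev (insert v A - {i})) = (\<Sum>i\<in>A. psibar_psi v v * tau_ev (A - {i}))"
  proof (rule sum.cong[OF refl])
    fix i assume "i \<in> A"
    then have "insert v A - {i} = insert v (A - {i})" using assms by auto
    then show "tau_ev (insert v A - {i}) = psibar_psi v v * tau_ev (A - {i})"
      using assms by (simp add: tau_ev_insert)
  qed
  finally show ?thesis by (simp add: sigma_ev_def sum_distrib_left)
qed

lemma rho_ev_insert:
  assumes "finite A" "v \<notin> A"
  shows "rho_ev (insert v A) = psibar_psi v v * rho_ev A + row_ev v A + col_ev v A"
proof -
  have "rho_ev (insert v A) = (\<Sum>j\<in>insert v A - {v}. psibar_psi v j * tau_ev (insert v A - {v, j}))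
      + (\<Sum>i\<in>A. \<Sum>j\<in>insert v A - {i}. psibar_psi i j * tau_ev (insert v A - {i, j}))"
    using assms by (simp add: rho_ev_def)
  also have "(\<Sum>j\<in>insert v A - {v}. psibar_psi v j * tau_ev (insert v A - {v, j})) = row_ev v A"
  proof -
    have "insert v A - {v} = A" using assms by auto
    moreover have "\<And>j. j \<in> A \<Longrightarrow> insert v A - {v, j} = A - {j}" using assms by auto
    ultimately show ?thesis by (simp add: row_ev_def)
  qed
  also have "(\<Sum>i\<in>A. \<Sum>j\<in>insert v A - {i}. psibar_psi i j * tau_ev (insert v A - {i, j}))
      = (\<Sum>i\<in>A. psibar_psi i v * tau_ev (A - {i}) + psibar_psi v v * (\<Sum>j\<in>A - {i}. psibar_psi i j * tau_ev (A - {i, j})))"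
  proof (rule sum.cong[OF refl])
    fix i assume i: "i \<in> A"
    have "insert v A - {i} = insert v (A - {i})" using assms i by auto
    then have "(\<Sum>j\<in>insert v A - {i}. psibar_psi i j * tau_ev (insert v A - {i, j}))
        = psibar_psi i v * tau_ev (insert v A - {i, v}) + (\<Sum>j\<in>A - {i}. psibar_psi i j * tau_ev (insert v A - {i, j}))"
      using assms by simp
    also have "insert v A - {i, v} = A - {i}" using assms i by auto
    also have "(\<Sum>j\<in>A - {i}. psibar_psi i j * tau_ev (insert v A - {i, j})) = (\<Sum>j\<in>A - {i}. psibar_psi v v * (psibar_psi i j * tau_ev (A - {i, j})))"
    proof (rule sum.cong[OF refl])
      fix j assume "j \<in> A - {i}"
      then have "insert v A - {i, j} = insert v (A - {i, j})" using assms i by auto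
      then show "psibar_psi i j * tau_ev (insert v A - {i, j}) = psibar_psi v v * (psibar_psi i j * tau_ev (A - {i, j}))"
        using assms by (simp add: tau_ev_insert mult_ac)
    qed
    finally show "(\<Sum>j\<in>insert v A - {i}. psibar_psi i j * tau_ev (insert v A - {i, j}))
      = psibar_psi i v * tau_ev (A - {i}) + psibar_psi v v * (\<Sum>j\<in>A - {i}. psibar_psi i j * tau_ev (A - {i, j}))"
      by (simp add: sum_distrib_left)
  qed
  also have "\<dots> = col_ev v A + psibar_psi v v * rho_ev A"
    by (simp add: sum.distrib col_ev_def rho_ev_def sum_distrib_left)
  finally show ?thesis by (simp add: algebra_simps)
qed

lemma f_ev_insert:
  assumes "finite A" "v \<notin> A"
  shows "f_ev c (insert v A) = tau_ev A + psibar_psi v v * f_ev c A - row_ev v A - col_ev v A"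
  using assms by (simp add: f_ev_def tau_ev_insert sigma_ev_insert rho_ev_insert algebra_simps)

lemma mult_insert_forms:
  fixes tA tB E hA hB xA xB yA yB KAB KBA :: "'a::comm_ring_1"
  assumes "E * E = 0" "E * xA = 0" "E * xB = 0" "E * yA = 0" "E * yB = 0" "xA * xB = 0" "yA * yB = 0"
    "xA * yB = - (E * KBA)" "yA * xB = - (E * KAB)"
  shows "(tA + E * hA - xA - yA) * (tB + E * hB - xB - yB)
     = tA * tB + E * (hB * tA + hA * tB - KAB - KBA) - (xA * tB + tA * xB) - (yA * tB + tA * yB)"
proof -
  have "(tA + E * hA - xA - yA) * (tB + E * hB - xB - yB) = tA*tB + E*(hB*tA) - tA*xB - tA*yB + E*(hA*tB)
     + (E*E)*(hA*hB) - hA*(E*xB) - hA*(E*yB) - xA*tB - hB*(E*xA) + xA*xB + xA*yB - yA*tB - hB*(E*yA)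
     + yA*xB + yA*yB"
    by (simp add: algebra_simps)
  also have "\<dots> = tA*tB + E*(hB*tA) - tA*xB - tA*yB + E*(hA*tB) - xA*tB - E * KBA - yA*tB - E * KAB"
    by (simp add: assms)
  finally show ?thesis by (simp add: algebra_simps)
qed

lemma square_pair_form:
  fixes a b c d :: "'a::comm_ring_1"
  assumes "a * a = 0" "b * b = 0" "c * c = 0" "d * d = 0" "a * c = 0" "a * d = 0" "b * c = 0" "b * d = 0"
    "c * d = - (a * b)"
  shows "(b + a - c - d) * (b + a - c - d) = 0"
proof -
  have "(b + a - c - d) * (b + a - c - d) = b*b + a*a + c*c + d*d + 2*(a*b) - 2*(b*c) - 2*(b*d) - 2*(a*c) - 2*(a*d) + 2*(c*d)"
    by (simp add: algebra_simps)
  then show ?thesis by (simp add: assms)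
qed

lemma tau_ev_union: "finite A \<Longrightarrow> finite B \<Longrightarrow> A \<inter> B = {} \<Longrightarrow> tau_ev (A \<union> B) = tau_ev A * tau_ev B"
  by (simp add: tau_ev_def prod.union_disjoint)

lemma sum_tau_ev_remove_union:
  assumes "finite A" "finite B" "A \<inter> B = {}"
  shows "(\<Sum>i\<in>A \<union> B. g i * tau_ev (A \<union> B - {i}))
    = (\<Sum>i\<in>A. g i * tau_ev (A - {i})) * tau_ev B + tau_ev A * (\<Sum>i\<in>B. g i * tau_ev (B - {i}))"
proof -
  have "(\<Sum>i\<in>A \<union> B. g i * tau_ev (A \<union> B - {i})) = (\<Sum>i\<in>A. g i * tau_ev (A \<union> B - {i})) + (\<Sum>i\<in>B. g i * tau_ev (A \<union> B - {i}))"
    using assms by (simp add: sum.union_disjoint)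
  also have "(\<Sum>i\<in>A. g i * tau_ev (A \<union> B - {i})) = (\<Sum>i\<in>A. g i * tau_ev (A - {i}) * tau_ev B)"
  proof (rule sum.cong[OF refl])
    fix i assume "i \<in> A"
    then have "A \<union> B - {i} = (A - {i}) \<union> B" using assms by auto
    moreover have "tau_ev ((A - {i}) \<union> B) = tau_ev (A - {i}) * tau_ev B" by (rule tau_ev_union) (use assms in auto)
    ultimately show "g i * tau_ev (A \<union> B - {i}) = g i * tau_ev (A - {i}) * tau_ev B"
      by (simp add: mult_ac)
  qed
  also have "(\<Sum>i\<in>B. g i * tau_ev (A \<union> B - {i})) = (\<Sum>i\<in>B. tau_ev A * (g i * tau_ev (B - {i})))"
  proof (rule sum.cong[OF refl])
    fix i assume "i \<in> B"
    then have "A \<union> B - {i} = A \<union> (B - {i})" using assms by auto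
    moreover have "tau_ev (A \<union> (B - {i})) = tau_ev A * tau_ev (B - {i})" by (rule tau_ev_union) (use assms in auto)
    ultimately show "g i * tau_ev (A \<union> B - {i}) = tau_ev A * (g i * tau_ev (B - {i}))"
      by (simp add: mult_ac)
  qed
  finally show ?thesis by (simp add: sum_distrib_left sum_distrib_right)
qed

lemma sigma_ev_union: "finite A \<Longrightarrow> finite B \<Longrightarrow> A \<inter> B = {} \<Longrightarrow> sigma_ev (A \<union> B) = sigma_ev A * tau_ev B + tau_ev A * sigma_ev B"
  using sum_tau_ev_remove_union[of A B "\<lambda>_. 1"] by (simp add: sigma_ev_def)
lemma row_ev_union: "finite A \<Longrightarrow> finite B \<Longrightarrow> A \<inter> B = {} \<Longrightarrow> row_ev v (A \<union> B) = row_ev v A * tau_ev B + tau_ev A * row_ev v B"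
  using sum_tau_ev_remove_union[of A B "\<lambda>j. psibar_psi v j"] by (simp add: row_ev_def)
lemma col_ev_union: "finite A \<Longrightarrow> finite B \<Longrightarrow> A \<inter> B = {} \<Longrightarrow> col_ev v (A \<union> B) = col_ev v A * tau_ev B + tau_ev A * col_ev v B"
  using sum_tau_ev_remove_union[of A B "\<lambda>i. psibar_psi i v"] by (simp add: col_ev_def)

definition cross_ev :: "'a::linorder set \<Rightarrow> 'a set \<Rightarrow> 'a grass_even" where
  "cross_ev A B = (\<Sum>i\<in>A. \<Sum>j\<in>B. psibar_psi i j * (tau_ev (A - {i}) * tau_ev (B - {j})))"

lemma rho_ev_union_row:
  assumes "finite A" "finite B" "A \<inter> B = {}" "i \<in> A"
  shows "(\<Sum>j\<in>A \<union> B - {i}. psibar_psi i j * tau_ev (A \<union> B - {i, j}))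
    = (\<Sum>j\<in>A - {i}. psibar_psi i j * tau_ev (A - {i, j})) * tau_ev B + (\<Sum>j\<in>B. psibar_psi i j * (tau_ev (A - {i}) * tau_ev (B - {j})))"
proof -
  have "A \<union> B - {i} = (A - {i}) \<union> B" using assms by auto
  then have "(\<Sum>j\<in>A \<union> B - {i}. psibar_psi i j * tau_ev (A \<union> B - {i, j}))
     = (\<Sum>j\<in>A - {i}. psibar_psi i j * tau_ev (A \<union> B - {i, j})) + (\<Sum>j\<in>B. psibar_psi i j * tau_ev (A \<union> B - {i, j}))"
    using assms by (simp add: sum.union_disjoint[of "A - {i}" B] Int_Diff disjoint_iff)
  also have "(\<Sum>j\<in>A - {i}. psibar_psi i j * tau_ev (A \<union> B - {i, j})) = (\<Sum>j\<in>A - {i}. psibar_psi i j * tau_ev (A - {i, j}) * tau_ev B)"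
  proof (rule sum.cong[OF refl])
    fix j assume "j \<in> A - {i}"
    then have "A \<union> B - {i, j} = (A - {i, j}) \<union> B" using assms by auto
    moreover have "tau_ev ((A - {i, j}) \<union> B) = tau_ev (A - {i, j}) * tau_ev B" by (rule tau_ev_union) (use assms in auto)
    ultimately show "psibar_psi i j * tau_ev (A \<union> B - {i, j}) = psibar_psi i j * tau_ev (A - {i, j}) * tau_ev B"
      by (simp add: mult_ac)
  qed
  also have "(\<Sum>j\<in>B. psibar_psi i j * tau_ev (A \<union> B - {i, j})) = (\<Sum>j\<in>B. psibar_psi i j * (tau_ev (A - {i}) * tau_ev (B - {j})))"
  proof (rule sum.cong[OF refl])
    fix j assume "j \<in> B"
    then have "A \<union> B - {i, j} = (A - {i}) \<union> (B - {j})" using assms by auto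
    moreover have "tau_ev ((A - {i}) \<union> (B - {j})) = tau_ev (A - {i}) * tau_ev (B - {j})" by (rule tau_ev_union) (use assms in auto)
    ultimately show "psibar_psi i j * tau_ev (A \<union> B - {i, j}) = psibar_psi i j * (tau_ev (A - {i}) * tau_ev (B - {j}))"
      by simp
  qed
  finally show ?thesis by (simp add: sum_distrib_right)
qed

lemma rho_ev_union:
  assumes "finite A" "finite B" "A \<inter> B = {}"
  shows "rho_ev (A \<union> B) = rho_ev A * tau_ev B + tau_ev A * rho_ev B + cross_ev A B + cross_ev B A"
proof -
  have "rho_ev (A \<union> B) = (\<Sum>i\<in>A. \<Sum>j\<in>A \<union> B - {i}. psibar_psi i j * tau_ev (A \<union> B - {i, j}))
      + (\<Sum>i\<in>B. \<Sum>j\<in>A \<union> B - {i}. psibar_psi i j * tau_ev (A \<union> B - {i, j}))"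
    using assms by (simp add: rho_ev_def sum.union_disjoint)
  also have "(\<Sum>i\<in>A. \<Sum>j\<in>A \<union> B - {i}. psibar_psi i j * tau_ev (A \<union> B - {i, j})) = rho_ev A * tau_ev B + cross_ev A B"
    using assms by (simp add: rho_ev_union_row sum.distrib rho_ev_def cross_ev_def sum_distrib_right)
  also have "(\<Sum>i\<in>B. \<Sum>j\<in>A \<union> B - {i}. psibar_psi i j * tau_ev (A \<union> B - {i, j})) = rho_ev B * tau_ev A + cross_ev B A"
  proof -
    have "A \<union> B = B \<union> A" by auto
    moreover have "B \<inter> A = {}" using assms by auto
    ultimately show ?thesis
      using assms by (simp add: rho_ev_union_row sum.distrib rho_ev_def cross_ev_def sum_distrib_right)
  qed
  finally show ?thesis by (simp add: algebra_simps)
qed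

lemma row_ev_mult_col_ev: "finite A \<Longrightarrow> finite B \<Longrightarrow> row_ev v A * col_ev v B = - (psibar_psi v v * cross_ev B A)"
proof -
  assume f: "finite A" "finite B"
  have "row_ev v A * col_ev v B = (\<Sum>j\<in>A. \<Sum>i\<in>B. (psibar_psi v j * psibar_psi i v) * (tau_ev (A - {j}) * tau_ev (B - {i})))"
    unfolding row_ev_def col_ev_def sum_product by (simp add: mult_ac)
  also have "\<dots> = (\<Sum>j\<in>A. \<Sum>i\<in>B. - (psibar_psi v v * (psibar_psi i j * (tau_ev (B - {i}) * tau_ev (A - {j})))))"
    by (intro sum.cong refl, subst psibar_psi_exchange[of v _ _ v]) (simp add: mult_ac)
  also have "\<dots> = (\<Sum>i\<in>B. \<Sum>j\<in>A. - (psibar_psi v v * (psibar_psi i j * (tau_ev (B - {i}) * tau_ev (A - {j})))))"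
    by (rule sum.swap)
  also have "\<dots> = - (psibar_psi v v * cross_ev B A)"
    by (simp add: cross_ev_def sum_distrib_left sum_negf)
  finally show ?thesis .
qed

lemma col_ev_mult_row_ev: "finite A \<Longrightarrow> finite B \<Longrightarrow> col_ev v A * row_ev v B = - (psibar_psi v v * cross_ev A B)"
proof -
  have "col_ev v A * row_ev v B = (\<Sum>i\<in>A. \<Sum>j\<in>B. (psibar_psi i v * psibar_psi v j) * (tau_ev (A - {i}) * tau_ev (B - {j})))"
    by (simp add: row_ev_def col_ev_def sum_product mult_ac)
  also have "\<dots> = (\<Sum>i\<in>A. \<Sum>j\<in>B. - (psibar_psi v v * (psibar_psi i j * (tau_ev (A - {i}) * tau_ev (B - {j})))))"
    by (intro sum.cong refl, subst psibar_psi_exchange[of _ v v]) (simp add: mult_ac)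
  also have "\<dots> = - (psibar_psi v v * cross_ev A B)"
    by (simp add: cross_ev_def sum_distrib_left sum_negf)
  finally show ?thesis .
qed

lemma row_ev_mult_row_ev: "row_ev v A * row_ev v B = 0"
proof -
  have "row_ev v A * row_ev v B = (\<Sum>i\<in>A. \<Sum>j\<in>B. (psibar_psi v i * psibar_psi v j) * (tau_ev (A - {i}) * tau_ev (B - {j})))"
    by (simp add: row_ev_def sum_product mult_ac)
  then show ?thesis by (simp add: psibar_psi_same_row)
qed

lemma col_ev_mult_col_ev: "col_ev v A * col_ev v B = 0"
proof -
  have "col_ev v A * col_ev v B = (\<Sum>i\<in>A. \<Sum>j\<in>B. (psibar_psi i v * psibar_psi j v) * (tau_ev (A - {i}) * tau_ev (B - {j})))"
    by (simp add: col_ev_def sum_product mult_ac)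
  then show ?thesis by (simp add: psibar_psi_same_col)
qed

lemma psibar_psi_mult_row_ev: "psibar_psi v v * row_ev v A = 0"
  by (simp add: row_ev_def sum_distrib_left mult.assoc[symmetric] psibar_psi_same_row)

lemma psibar_psi_mult_col_ev: "psibar_psi v v * col_ev v A = 0"
  by (simp add: col_ev_def sum_distrib_left mult.assoc[symmetric] psibar_psi_same_col)

text \<open>Write \<open>A = A' \<union> {v}\<close>, \<open>B = B' \<union> {v}\<close> and expand both factors by \<open>f_ev_insert\<close>: all
  products of two terms through \<open>v\<close> vanish, except row-column products, which produce
  the cross terms of \<open>rho_ev (A' \<union> B')\<close>.\<close>

lemma f_ev_mult_one_common:
  assumes "finite A" "finite B" "A \<inter> B = {v}"
  shows "f_ev c A * f_ev d B = f_ev (c + d) (A \<union> B)"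
proof -
  define A' where "A' = A - {v}"
  define B' where "B' = B - {v}"
  have vA: "v \<in> A" and vB: "v \<in> B" using assms by auto
  have A: "A = insert v A'" and B: "B = insert v B'" using vA vB by (auto simp: A'_def B'_def)
  have fA: "finite A'" "v \<notin> A'" and fB: "finite B'" "v \<notin> B'" using assms by (auto simp: A'_def B'_def)
  have dis: "A' \<inter> B' = {}" using assms by (auto simp: A'_def B'_def)
  have U: "A \<union> B = insert v (A' \<union> B')" using A B by auto
  have fU: "finite (A' \<union> B')" "v \<notin> A' \<union> B'" using fA fB by auto
  have "f_ev c A * f_ev d B = (tau_ev A' + psibar_psi v v * f_ev c A' - row_ev v A' - col_ev v A') * (tau_ev B' + psibar_psi v v * f_ev d B' - row_ev v B' - col_ev v B')"
    by (simp add: A B f_ev_insert fA fB)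
  also have "\<dots> = tau_ev A' * tau_ev B' + psibar_psi v v * (f_ev d B' * tau_ev A' + f_ev c A' * tau_ev B' - cross_ev A' B' - cross_ev B' A')
     - (row_ev v A' * tau_ev B' + tau_ev A' * row_ev v B') - (col_ev v A' * tau_ev B' + tau_ev A' * col_ev v B')"
    by (rule mult_insert_forms) (simp_all add: psibar_psi_same_row psibar_psi_mult_row_ev psibar_psi_mult_col_ev row_ev_mult_row_ev col_ev_mult_col_ev row_ev_mult_col_ev col_ev_mult_row_ev fA fB)
  also have "\<dots> = f_ev (c + d) (A \<union> B)"
    unfolding U f_ev_insert[OF fU] using fA fB dis
    by (simp add: tau_ev_union sigma_ev_union rho_ev_union row_ev_union col_ev_union f_ev_def algebra_simps)
  finally show ?thesis .
qed

lemma f_ev_singleton: "f_ev c {v} = 1 - c * psibar_psi v v"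
  using f_ev_insert[of "{}" v c] by (simp add: f_ev_def sigma_ev_def rho_ev_def row_ev_def col_ev_def)

lemma f_ev_pair_square:
  assumes "u \<noteq> v"
  shows "f_ev 0 {u, v} * f_ev 0 {u, v} = 0"
proof -
  have "f_ev 0 {u, v} = tau_ev {v} + psibar_psi u u * f_ev 0 {v} - row_ev u {v} - col_ev u {v}"
    using f_ev_insert[of "{v}" u 0] assms by simp
  also have "\<dots> = psibar_psi v v + psibar_psi u u - psibar_psi u v - psibar_psi v u"
    by (simp add: tau_ev_def f_ev_singleton row_ev_def col_ev_def)
  finally have h: "f_ev 0 {u, v} = psibar_psi v v + psibar_psi u u - psibar_psi u v - psibar_psi v u" .
  show ?thesis unfolding h
    by (rule square_pair_form) (simp_all add: psibar_psi_same_row psibar_psi_same_col psibar_psi_exchange[of u v v u] mult.commute[of "psibar_psi u u"])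
qed

lemma f_ev_mult_two_common:
  assumes "finite A" "finite B" "u \<in> A" "v \<in> A" "u \<in> B" "v \<in> B" "u \<noteq> v"
  shows "f_ev c A * f_ev d B = 0"
proof -
  have "f_ev c A = f_ev (0 + c) ({u, v} \<union> (A - {u}))"
    using assms by (simp add: insert_absorb)
  also have "\<dots> = f_ev 0 {u, v} * f_ev c (A - {u})"
    by (rule f_ev_mult_one_common[symmetric]) (use assms in auto)
  finally have a: "f_ev c A = f_ev 0 {u, v} * f_ev c (A - {u})" .
  have "f_ev d B = f_ev (0 + d) ({u, v} \<union> (B - {u}))"
    using assms by (simp add: insert_absorb)
  also have "\<dots> = f_ev 0 {u, v} * f_ev d (B - {u})"
    by (rule f_ev_mult_one_common[symmetric]) (use assms in auto)
  finally have b: "f_ev d B = f_ev 0 {u, v} * f_ev d (B - {u})" .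
  have "f_ev c A * f_ev d B = (f_ev 0 {u, v} * f_ev 0 {u, v}) * (f_ev c (A - {u}) * f_ev d (B - {u}))"
    unfolding a b by (simp add: mult_ac)
  then show ?thesis using f_ev_pair_square[OF assms(7)] by simp
qed

lemma tau_eq_grass_of: "tau A = grass_of (tau_ev A)"
proof (cases "finite A")
  case True
  have "tau_ev A = prod_list (map (\<lambda>k. psibar_psi k k) (sorted_list_of_set A))"
    using prod.distinct_set_conv_list[of "sorted_list_of_set A" "\<lambda>k. psibar_psi k k"] True by (simp add: tau_ev_def)
  then show ?thesis
    by (simp add: tau_def gprod_list_def grass_of_prod_list comp_def grass_of_psibar_psi)
next
  case False
  then show ?thesis by (simp add: tau_def gprod_list_def tau_ev_def one_grass_even.rep_eq)
qed

lemma fA_eq_grass_of: "fA lam A = grass_of (f_ev (scalar (lam * (real (card A) - 1))) A)"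
proof -
  have 1: "- grass_of (scalar (lam * (real (card A) - 1)) * tau_ev A) = gscale (lam * (1 - real (card A))) (tau A)"
    unfolding grass_of_scalar_mult tau_eq_grass_of by (simp add: gscale_def fun_eq_iff algebra_simps)
  have 2: "grass_of (sigma_ev A) = (\<Sum>i\<in>A. tau (A - {i}))"
    by (simp add: sigma_ev_def grass_of_sum tau_eq_grass_of)
  have 3: "grass_of (rho_ev A) = (\<Sum>i\<in>A. \<Sum>j\<in>A - {i}. psibar i \<odot> psi j \<odot> tau (A - {i, j}))"
    by (simp add: rho_ev_def grass_of_sum grass_of_mult grass_of_psibar_psi tau_eq_grass_of)
  show ?thesis
    unfolding f_ev_def grass_of_add grass_of_diff grass_of_uminus 1 2 3 fA_def ..
qed

lemma gprod_set_eq_grass_of: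
  assumes "finite S" "\<And>C. C \<in> S \<Longrightarrow> f C = grass_of (g C)"
  shows "gprod_set S f = grass_of (\<Prod>C\<in>S. g C)"
proof -
  define xs where "xs = (SOME xs. distinct xs \<and> set xs = S)"
  have "\<exists>xs. distinct xs \<and> set xs = S" using assms(1) finite_distinct_list by blast
  then have xs: "distinct xs" "set xs = S" unfolding xs_def by (metis (mono_tags, lifting) someI_ex)+
  have "(\<Prod>C\<in>S. g C) = prod_list (map g xs)"
    using xs prod.distinct_set_conv_list[of xs g] by simp
  then have "grass_of (\<Prod>C\<in>S. g C) = foldr gmul (map (grass_of \<circ> g) xs) gone"
    by (simp add: grass_of_prod_list)
  also have "map (grass_of \<circ> g) xs = map f xs"
    using assms(2) xs by (auto intro!: map_cong)
  finally show ?thesis by (simp add: gprod_set_def gprod_list_def xs_def)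
qed

section \<open>Nilpotency and the exponential\<close>

definition degree_at_least :: "('a \<times> bool) set \<Rightarrow> nat \<Rightarrow> 'a::linorder grass_even \<Rightarrow> bool" where
  "degree_at_least G k s \<longleftrightarrow> (\<forall>S. grass_of s S \<noteq> 0 \<longrightarrow> S \<subseteq> G \<and> k \<le> card S)"

lemma degree_at_least_mult:
  assumes "degree_at_least G a x" "degree_at_least G b y"
  shows "degree_at_least G (a + b) (x * y)"
  unfolding degree_at_least_def
proof (intro allI impI)
  fix S assume nz: "grass_of (x * y) S \<noteq> 0"
  then have fin: "finite S" by (auto simp: grass_of_mult gmul_def split: if_splits)
  then have "(\<Sum>T\<in>Pow S. gsign T (S - T) * grass_of x T * grass_of y (S - T)) \<noteq> 0"
    using nz by (simp add: grass_of_mult gmul_def)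
  then obtain T where T0: "T \<in> Pow S" "gsign T (S - T) * grass_of x T * grass_of y (S - T) \<noteq> 0"
    by (meson sum.neutral)
  then have T: "T \<subseteq> S" "grass_of x T \<noteq> 0" "grass_of y (S - T) \<noteq> 0" by auto
  then have "T \<subseteq> G" "a \<le> card T" "S - T \<subseteq> G" "b \<le> card (S - T)"
    using assms unfolding degree_at_least_def by blast+
  moreover have "card S = card T + card (S - T)"
    using T(1) fin by (metis card_Diff_subset card_mono finite_subset le_add_diff_inverse)
  ultimately show "S \<subseteq> G \<and> a + b \<le> card S" by auto
qed

lemma degree_at_least_mono: "degree_at_least G k x \<Longrightarrow> j \<le> k \<Longrightarrow> degree_at_least G j x"
  by (auto simp: degree_at_least_def)
lemma degree_at_least_zero: "degree_at_least G k 0"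
  by (simp add: degree_at_least_def zero_grass_even.rep_eq)
lemma degree_at_least_one: "degree_at_least G 0 1"
  by (simp add: degree_at_least_def one_grass_even.rep_eq gone_def)
lemma degree_at_least_add: "degree_at_least G k x \<Longrightarrow> degree_at_least G k y \<Longrightarrow> degree_at_least G k (x + y)"
  unfolding degree_at_least_def grass_of_add plus_fun_apply by (metis add.left_neutral add.right_neutral)
lemma degree_at_least_uminus: "degree_at_least G k x \<Longrightarrow> degree_at_least G k (- x)"
  by (auto simp: degree_at_least_def grass_of_uminus)
lemma degree_at_least_diff: "degree_at_least G k x \<Longrightarrow> degree_at_least G k y \<Longrightarrow> degree_at_least G k (x - y)"
  unfolding degree_at_least_def grass_of_diff minus_apply by (metis diff_zero diff_self)
lemma degree_at_least_scalar_mult: "degree_at_least G k x \<Longrightarrow> degree_at_least G k (scalar c * x)"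
  by (auto simp: degree_at_least_def grass_of_scalar_mult gscale_def)
lemma degree_at_least_sum: "(\<And>i. i \<in> I \<Longrightarrow> degree_at_least G k (f i)) \<Longrightarrow> degree_at_least G k (\<Sum>i\<in>I. f i)"
proof (induction I rule: infinite_finite_induct)
  case (infinite A) then show ?case by (simp add: degree_at_least_zero)
next
  case empty then show ?case by (simp add: degree_at_least_zero)
next
  case (insert x F) then show ?case by (simp add: degree_at_least_add)
qed
lemma degree_at_least_pow: "degree_at_least G 1 x \<Longrightarrow> degree_at_least G n (x ^ n)"
proof (induction n)
  case 0 then show ?case by (simp add: degree_at_least_one)
next
  case (Suc n) then show ?case using degree_at_least_mult[of G 1 x n "x ^ n"] by simp
qed
lemma degree_at_least_card_eq_0:
  assumes "finite G" "degree_at_least G k x" "card G < k"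
  shows "x = 0"
proof -
  have "grass_of x S = 0" for S
  proof (rule ccontr)
    assume "grass_of x S \<noteq> 0"
    then have "S \<subseteq> G" "k \<le> card S" using assms(2) unfolding degree_at_least_def by blast+
    then have "k \<le> card G" using card_mono[OF assms(1)] by (meson le_trans)
    then show False using assms(3) by simp
  qed
  then have "grass_of x = grass_of 0" by (simp add: zero_grass_even.rep_eq fun_eq_iff)
  then show ?thesis by (simp add: grass_of_inject)
qed

lemma degree_at_least_psibar_psi: "(i, False) \<in> G \<Longrightarrow> (j, True) \<in> G \<Longrightarrow> degree_at_least G 2 (psibar_psi i j)"
  unfolding degree_at_least_def grass_of_psibar_psi psibar_def psi_def gen_gmul_gen
proof (intro allI impI)
  fix S assume a: "(i, False) \<in> G" "(j, True) \<in> G"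
    and "(if (i, False) \<noteq> (j, True) \<and> S = {(i, False), (j, True)} then if (j, True) < (i, False) then - 1 else 1 else 0) \<noteq> (0::real)"
  then have "S = {(i, False), (j, True)}" by (simp split: if_splits)
  then show "S \<subseteq> G \<and> 2 \<le> card S" using a by simp
qed

definition exp_trunc :: "nat \<Rightarrow> 'a::linorder grass_even \<Rightarrow> 'a grass_even" where
  "exp_trunc N s = (\<Sum>n\<le>N. scalar (1 / fact n) * s ^ n)"

lemma power_add_square_zero:
  fixes s y :: "'a::comm_ring_1"
  assumes "y * y = 0"
  shows "(s + y) ^ Suc n = s ^ Suc n + of_nat (Suc n) * y * s ^ n"
proof (induction n)
  case 0 then show ?case by simp
next
  case (Suc n)
  have "(s + y) ^ Suc (Suc n) = (s + y) * (s ^ Suc n + of_nat (Suc n) * y * s ^ n)"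
    using Suc by simp
  also have "\<dots> = s ^ Suc (Suc n) + of_nat (Suc n) * y * s ^ Suc n + y * s ^ Suc n + of_nat (Suc n) * (y * y) * s ^ n"
    by (simp add: algebra_simps)
  also have "\<dots> = s ^ Suc (Suc n) + of_nat (Suc (Suc n)) * y * s ^ Suc n"
    using assms by (simp add: algebra_simps)
  finally show ?case .
qed

text \<open>The truncated form of \<open>exp (s + y) = (1 + y) exp s\<close>: as \<open>y\<^sup>2 = 0\<close>, the terms linear
  in \<open>y\<close> reassemble into \<open>y * exp_trunc (N - 1) s\<close>, which equals \<open>y * exp_trunc N s\<close>
  because \<open>s ^ N = 0\<close>.\<close>

lemma exp_trunc_add_square_zero:
  assumes "y * y = 0" "s ^ N = 0"
  shows "exp_trunc N (s + y) = (1 + y) * exp_trunc N s"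
proof (cases N)
  case 0
  then have "(1::'a grass_even) = 0" using assms by simp
  then show ?thesis by simp
next
  case (Suc M)
  have c: "scalar (1 / fact (Suc i)) * of_nat (Suc i) = scalar (1 / fact i)" for i
  proof -
    have "fact (Suc i) = real (Suc i) * fact i" by simp
    moreover have "(fact i :: real) > 0" by simp
    moreover have "0 < (fact i::real) + fact i * real i" by (simp add: add_pos_nonneg)
    ultimately have "1 / fact (Suc i) * real (Suc i) = (1 / fact i :: real)"
      by (simp add: field_simps)
    then show ?thesis by (metis scalar_mult scalar_of_nat)
  qed
  have "exp_trunc N (s + y) = 1 + (\<Sum>i\<le>M. scalar (1 / fact (Suc i)) * (s ^ Suc i + of_nat (Suc i) * y * s ^ i))"
    unfolding exp_trunc_def Suc sum.atMost_Suc_shift using power_add_square_zero[OF assms(1)] by simp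
  also have "\<dots> = 1 + (\<Sum>i\<le>M. scalar (1 / fact (Suc i)) * s ^ Suc i) + y * (\<Sum>i\<le>M. (scalar (1 / fact (Suc i)) * of_nat (Suc i)) * s ^ i)"
    by (simp add: algebra_simps sum.distrib sum_distrib_left)
  also have "\<dots> = exp_trunc N s + y * exp_trunc M s"
    unfolding c exp_trunc_def Suc sum.atMost_Suc_shift by simp
  finally have *: "exp_trunc N (s + y) = exp_trunc N s + y * exp_trunc M s" .
  have "exp_trunc N s = exp_trunc M s"
    using assms(2) unfolding exp_trunc_def Suc by simp
  then show ?thesis using * by (simp add: algebra_simps)
qed

lemma sum_atMost_eq_support:
  fixes f :: "nat \<Rightarrow> real"
  assumes "\<And>n. f n \<noteq> 0 \<Longrightarrow> n \<le> a \<and> n \<le> b"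
  shows "(\<Sum>n\<le>a. f n) = (\<Sum>n\<le>b. f n)"
proof -
  have "(\<Sum>n\<le>a. f n) = (\<Sum>n\<le>min a b. f n)"
    by (rule sum.mono_neutral_right) (use assms in auto)
  also have "\<dots> = (\<Sum>n\<le>b. f n)"
    by (rule sum.mono_neutral_left) (use assms in auto)
  finally show ?thesis .
qed

lemma gexp_grass_of:
  assumes G: "finite G" and low: "degree_at_least G 1 s" and N: "card G \<le> N"
  shows "gexp (grass_of s) = grass_of (exp_trunc N s)"
proof (rule ext)
  fix S
  have z: "grass_of s {} = 0" using low by (auto simp: degree_at_least_def)
  have r: "grass_of s - gscale 0 gone = grass_of s"
    by (simp add: z gscale_def fun_eq_iff)
  have "gexp (grass_of s) S = (\<Sum>n\<le>card S. grass_of (s ^ n) S / fact n)"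
    unfolding gexp_def z r gpow_grass_of[symmetric] by simp
  also have "\<dots> = (\<Sum>n\<le>N. grass_of (s ^ n) S / fact n)"
  proof (rule sum_atMost_eq_support)
    fix n assume "grass_of (s ^ n) S / fact n \<noteq> 0"
    then have "grass_of (s ^ n) S \<noteq> 0" by simp
    moreover have "degree_at_least G n (s ^ n)" using degree_at_least_pow[OF low] .
    ultimately have "S \<subseteq> G" "n \<le> card S" unfolding degree_at_least_def by blast+
    moreover have "card S \<le> card G" using card_mono[OF G] \<open>S \<subseteq> G\<close> .
    ultimately show "n \<le> card S \<and> n \<le> N" using N by simp
  qed
  also have "\<dots> = grass_of (exp_trunc N s) S"
    by (simp add: exp_trunc_def grass_of_sum sum_fun_apply grass_of_scalar_mult gscale_def)
  finally show "gexp (grass_of s) S = grass_of (exp_trunc N s) S" .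
qed

section \<open>Connectivity in hypergraphs\<close>

definition hadj :: "'v set set \<Rightarrow> ('v \<times> 'v) set" where
  "hadj F = {(x, y). \<exists>A\<in>F. x \<in> A \<and> y \<in> A}"

lemma hconn_hadj: "hconn F = (hadj F)\<^sup>*"
  by (simp add: hconn_def hadj_def)

lemma sym_hadj: "sym (hadj F)"
  by (auto simp: sym_def hadj_def)

lemma hconn_sym: "(x, y) \<in> hconn F \<Longrightarrow> (y, x) \<in> hconn F"
  unfolding hconn_hadj by (metis sym_hadj sym_rtrancl symD)

lemma hconn_trans: "(x, y) \<in> hconn F \<Longrightarrow> (y, z) \<in> hconn F \<Longrightarrow> (x, z) \<in> hconn F"
  unfolding hconn_hadj by (rule rtrancl_trans)

lemma hconn_refl[simp]: "(x, x) \<in> hconn F"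
  unfolding hconn_hadj by simp

lemma hconn_edge: "A \<in> F \<Longrightarrow> x \<in> A \<Longrightarrow> y \<in> A \<Longrightarrow> (x, y) \<in> hconn F"
  unfolding hconn_hadj hadj_def by auto

lemma hconn_mono: "F \<subseteq> F' \<Longrightarrow> (x, y) \<in> hconn F \<Longrightarrow> (x, y) \<in> hconn F'"
  unfolding hconn_hadj hadj_def by (erule rtrancl_mono[THEN subsetD, rotated]) auto

lemma hconn_insert:
  "(x, y) \<in> hconn (insert B F) \<longleftrightarrow>
     (x, y) \<in> hconn F \<or> (\<exists>b1\<in>B. \<exists>b2\<in>B. (x, b1) \<in> hconn F \<and> (b2, y) \<in> hconn F)"
proof
  assume "(x, y) \<in> hconn (insert B F)"
  then have "(x, y) \<in> (hadj (insert B F))\<^sup>*" by (simp add: hconn_hadj)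
  then show "(x, y) \<in> hconn F \<or> (\<exists>b1\<in>B. \<exists>b2\<in>B. (x, b1) \<in> hconn F \<and> (b2, y) \<in> hconn F)"
  proof (induction rule: rtrancl_induct)
    case base then show ?case by simp
  next
    case (step y z)
    from step.hyps(2) obtain A where A: "A \<in> insert B F" "y \<in> A" "z \<in> A" by (auto simp: hadj_def)
    show ?case
    proof (cases "A \<in> F")
      case True
      then have yz: "(y, z) \<in> hconn F" using A by (simp add: hconn_edge)
      from step.IH show ?thesis
      proof
        assume "(x, y) \<in> hconn F"
        then have "(x, z) \<in> hconn F" using yz by (rule hconn_trans)
        then show ?thesis by simp
      next
        assume "\<exists>b1\<in>B. \<exists>b2\<in>B. (x, b1) \<in> hconn F \<and> (b2, y) \<in> hconn F"
        then obtain b1 b2 where "b1 \<in> B" "b2 \<in> B" "(x, b1) \<in> hconn F" "(b2, y) \<in> hconn F" by blast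
        moreover have "(b2, z) \<in> hconn F" using \<open>(b2, y) \<in> hconn F\<close> yz by (rule hconn_trans)
        ultimately show ?thesis by blast
      qed
    next
      case False
      then have AB: "A = B" using A by simp
      from step.IH show ?thesis
      proof
        assume "(x, y) \<in> hconn F"
        moreover have "(z, z) \<in> hconn F" by simp
        ultimately show ?thesis using A AB by blast
      next
        assume "\<exists>b1\<in>B. \<exists>b2\<in>B. (x, b1) \<in> hconn F \<and> (b2, y) \<in> hconn F"
        then obtain b1 where "b1 \<in> B" "(x, b1) \<in> hconn F" by blast
        moreover have "(z, z) \<in> hconn F" by simp
        ultimately show ?thesis using A AB by blast
      qed
    qed
  qed
next
  assume "(x, y) \<in> hconn F \<or> (\<exists>b1\<in>B. \<exists>b2\<in>B. (x, b1) \<in> hconn F \<and> (b2, y) \<in> hconn F)"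
  then show "(x, y) \<in> hconn (insert B F)"
  proof
    assume "(x, y) \<in> hconn F" then show ?thesis by (rule hconn_mono[rotated]) auto
  next
    assume "\<exists>b1\<in>B. \<exists>b2\<in>B. (x, b1) \<in> hconn F \<and> (b2, y) \<in> hconn F"
    then obtain b1 b2 where b: "b1 \<in> B" "b2 \<in> B" "(x, b1) \<in> hconn F" "(b2, y) \<in> hconn F" by blast
    have "(x, b1) \<in> hconn (insert B F)" "(b2, y) \<in> hconn (insert B F)"
      using b by (auto intro: hconn_mono[rotated])
    moreover have "(b1, b2) \<in> hconn (insert B F)" using b by (auto intro: hconn_edge)
    ultimately show ?thesis by (meson hconn_trans)
  qed
qed

lemma hconn_chain:
  assumes "\<And>t. t < n \<Longrightarrow> (f t, f (Suc t)) \<in> hconn F"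
  shows "(f 0, f n) \<in> hconn F"
  using assms by (induction n) (auto intro: hconn_trans)

lemma hconn_in_V:
  assumes "\<forall>A\<in>F. A \<subseteq> V" "(x, y) \<in> hconn F" "x \<in> V"
  shows "y \<in> V"
proof -
  have "(x, y) \<in> (hadj F)\<^sup>*" using assms(2) by (simp add: hconn_hadj)
  then show ?thesis
    by (induction rule: rtrancl_induct) (use assms in \<open>auto simp: hadj_def\<close>)
qed

definition hclass :: "'v set set \<Rightarrow> 'v \<Rightarrow> 'v set" where
  "hclass F x = {y. (x, y) \<in> hconn F}"

lemma components_hclass: "components V F = hclass F ` V"
  by (auto simp: components_def quotient_def hclass_def Image_def)

lemma hclass_in_components: "x \<in> V \<Longrightarrow> hclass F x \<in> components V F"
  by (simp add: components_hclass)

lemma hclass_self: "x \<in> hclass F x"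
  by (simp add: hclass_def)

lemma hclass_eq:
  assumes "(x, y) \<in> hconn F"
  shows "hclass F x = hclass F y"
proof -
  have "(x, z) \<in> hconn F \<longleftrightarrow> (y, z) \<in> hconn F" for z
    using assms hconn_sym hconn_trans by meson
  then show ?thesis by (simp add: hclass_def)
qed

lemma hclass_disj:
  assumes "z \<in> hclass F x" "z \<in> hclass F y"
  shows "hclass F x = hclass F y"
proof -
  have "(x, z) \<in> hconn F" "(y, z) \<in> hconn F" using assms by (simp_all add: hclass_def)
  then have "(x, y) \<in> hconn F" using hconn_sym hconn_trans by meson
  then show ?thesis by (rule hclass_eq)
qed

lemma hclass_sub_V: "\<forall>A\<in>F. A \<subseteq> V \<Longrightarrow> x \<in> V \<Longrightarrow> hclass F x \<subseteq> V"
proof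
  fix y assume "\<forall>A\<in>F. A \<subseteq> V" "x \<in> V" "y \<in> hclass F x"
  then show "y \<in> V" using hconn_in_V[of F V x y] by (simp add: hclass_def)
qed

lemma hclass_insert:
  "hclass (insert B F) x =
     (if \<exists>b\<in>B. (x, b) \<in> hconn F then {y. \<exists>b\<in>B. (b, y) \<in> hconn F} else hclass F x)"
proof (cases "\<exists>b\<in>B. (x, b) \<in> hconn F")
  case True
  then obtain b1 where b1: "b1 \<in> B" "(x, b1) \<in> hconn F" by blast
  have "(x, y) \<in> hconn (insert B F) \<longleftrightarrow> (\<exists>b\<in>B. (b, y) \<in> hconn F)" for y
  proof
    assume "(x, y) \<in> hconn (insert B F)"
    then show "\<exists>b\<in>B. (b, y) \<in> hconn F" unfolding hconn_insert
    proof
      assume "(x, y) \<in> hconn F"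
      then have "(b1, y) \<in> hconn F" using b1 by (meson hconn_sym hconn_trans)
      then show ?thesis using b1 by blast
    qed blast
  next
    assume "\<exists>b\<in>B. (b, y) \<in> hconn F"
    then show "(x, y) \<in> hconn (insert B F)" unfolding hconn_insert using b1 by blast
  qed
  then show ?thesis using True by (auto simp: hclass_def)
next
  case False
  then show ?thesis unfolding hclass_def hconn_insert by auto
qed

lemma Union_components_meeting:
  assumes "B \<subseteq> V"
  shows "\<Union>{C \<in> components V F. C \<inter> B \<noteq> {}} = {y. \<exists>b\<in>B. (b, y) \<in> hconn F}"
proof
  show "\<Union>{C \<in> components V F. C \<inter> B \<noteq> {}} \<subseteq> {y. \<exists>b\<in>B. (b, y) \<in> hconn F}"
  proof
    fix y assume "y \<in> \<Union>{C \<in> components V F. C \<inter> B \<noteq> {}}"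
    then obtain C b where C: "C \<in> components V F" "b \<in> C" "b \<in> B" "y \<in> C" by blast
    then obtain x where "C = hclass F x" by (auto simp: components_hclass)
    then have "(x, y) \<in> hconn F" "(x, b) \<in> hconn F" using C by (simp_all add: hclass_def)
    then have "(b, y) \<in> hconn F" by (blast intro: hconn_sym hconn_trans)
    then show "y \<in> {y. \<exists>b\<in>B. (b, y) \<in> hconn F}" using C(3) by blast
  qed
  show "{y. \<exists>b\<in>B. (b, y) \<in> hconn F} \<subseteq> \<Union>{C \<in> components V F. C \<inter> B \<noteq> {}}"
  proof
    fix y assume "y \<in> {y. \<exists>b\<in>B. (b, y) \<in> hconn F}"
    then obtain b where b: "b \<in> B" "(b, y) \<in> hconn F" by auto
    then have "hclass F b \<in> {C \<in> components V F. C \<inter> B \<noteq> {}}"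
      using assms hclass_self[of b F] by (auto simp: hclass_in_components)
    moreover have "y \<in> hclass F b" using b by (simp add: hclass_def)
    ultimately show "y \<in> \<Union>{C \<in> components V F. C \<inter> B \<noteq> {}}" by blast
  qed
qed

lemma components_insert:
  fixes F :: "'v set set"
  assumes "B \<subseteq> V" "B \<noteq> {}"
  defines "Cs \<equiv> {C \<in> components V F. C \<inter> B \<noteq> {}}"
  shows "components V (insert B F) = insert (\<Union>Cs) (components V F - Cs)"
proof -
  have new: "hclass (insert B F) x = (if \<exists>b\<in>B. (x, b) \<in> hconn F then \<Union>Cs else hclass F x)" for x
    unfolding hclass_insert Cs_def Union_components_meeting[OF assms(1)] ..
  have outside: "hclass F x \<notin> Cs \<longleftrightarrow> \<not> (\<exists>b\<in>B. (x, b) \<in> hconn F)" if "x \<in> V" for x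
    using that hclass_in_components[of x V F] by (auto simp: Cs_def hclass_def)
  show ?thesis
  proof
    show "components V (insert B F) \<subseteq> insert (\<Union>Cs) (components V F - Cs)"
    proof
      fix C assume "C \<in> components V (insert B F)"
      then obtain x where x: "x \<in> V" "C = hclass (insert B F) x" by (auto simp: components_hclass)
      then show "C \<in> insert (\<Union>Cs) (components V F - Cs)"
        using new[of x] outside[of x] by (auto simp: hclass_in_components split: if_splits)
    qed
    show "insert (\<Union>Cs) (components V F - Cs) \<subseteq> components V (insert B F)"
    proof
      fix C assume C: "C \<in> insert (\<Union>Cs) (components V F - Cs)"
      show "C \<in> components V (insert B F)"
      proof (cases "C = \<Union>Cs")
        case True
        obtain b where b: "b \<in> B" using assms(2) by blast
        then have "hclass (insert B F) b = \<Union>Cs" using new[of b] by auto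
        then show ?thesis using True b assms(1) by (auto simp: components_hclass)
      next
        case False
        then obtain x where x: "x \<in> V" "C = hclass F x" "hclass F x \<notin> Cs"
          using C by (auto simp: components_hclass)
        then have "hclass (insert B F) x = C" using new[of x] outside[of x] by simp
        then show ?thesis using x by (auto simp: components_hclass)
      qed
    qed
  qed
qed

definition hpath :: "'v set set \<Rightarrow> 'v list \<Rightarrow> 'v set list \<Rightarrow> bool" where
  "hpath F vs es \<longleftrightarrow> length vs = Suc (length es) \<and> distinct vs \<and> distinct es \<and> set es \<subseteq> F
     \<and> (\<forall>t<length es. vs ! t \<in> es ! t \<and> vs ! Suc t \<in> es ! t)"

lemma hpath_take:
  assumes "hpath F vs es" "p \<le> length es"
  shows "hpath F (take (Suc p) vs) (take p es)"
  using assms set_take_subset[of p es] by (auto simp: hpath_def)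

lemma hpath_snoc:
  assumes "hpath F vs es" "vs ! length es \<in> A" "z \<in> A" "A \<in> F" "z \<notin> set vs" "A \<notin> set es"
  shows "hpath F (vs @ [z]) (es @ [A])"
proof -
  have len: "length vs = Suc (length es)" using assms(1) by (simp add: hpath_def)
  have "(vs @ [z]) ! t \<in> (es @ [A]) ! t \<and> (vs @ [z]) ! Suc t \<in> (es @ [A]) ! t"
    if "t < length (es @ [A])" for t
  proof (cases "t < length es")
    case True
    then show ?thesis using assms(1) len by (simp add: hpath_def nth_append)
  next
    case False
    then have "t = length es" using that by simp
    then show ?thesis using assms(2,3) len by (simp add: nth_append)
  qed
  then show ?thesis using assms len by (auto simp: hpath_def)
qed

lemma hconn_hpath:
  assumes "(x, y) \<in> hconn F"
  shows "\<exists>vs es. hpath F vs es \<and> vs ! 0 = x \<and> vs ! length es = y"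
proof -
  have "(x, y) \<in> (hadj F)\<^sup>*" using assms by (simp add: hconn_hadj)
  then show ?thesis
  proof (induction rule: rtrancl_induct)
    case base
    have "hpath F [x] []" by (simp add: hpath_def)
    then show ?case by fastforce
  next
    case (step y z)
    from step.IH obtain vs es where P: "hpath F vs es" "vs ! 0 = x" "vs ! length es = y" by blast
    from step.hyps(2) obtain A where A: "A \<in> F" "y \<in> A" "z \<in> A" by (auto simp: hadj_def)
    have len: "length vs = Suc (length es)" using P(1) by (simp add: hpath_def)
    show ?case
    proof (cases "z \<in> set vs")
      case True
      then obtain p where p: "p < length vs" "vs ! p = z" by (auto simp: in_set_conv_nth)
      then have pl: "p \<le> length es" using len by simp
      have "hpath F (take (Suc p) vs) (take p es)" by (rule hpath_take[OF P(1) pl])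
      moreover have "take (Suc p) vs ! 0 = x" using P(2) by simp
      moreover have "take (Suc p) vs ! length (take p es) = z" using p pl by (simp add: min_def)
      ultimately show ?thesis by blast
    next
      case znot: False
      show ?thesis
      proof (cases "A \<in> set es")
        case True
        then obtain q where q: "q < length es" "es ! q = A" by (auto simp: in_set_conv_nth)
        let ?vs = "take (Suc q) vs" and ?es = "take q es"
        have path: "hpath F ?vs ?es" using hpath_take[OF P(1)] q by simp
        have "vs ! q \<in> es ! q" using P(1) q(1) by (simp add: hpath_def)
        then have last: "?vs ! length ?es \<in> A" using q by (simp add: min_def)
        have A_new: "A \<notin> set ?es"
        proof
          assume "A \<in> set ?es"
          then obtain r where "r < q" "es ! r = A" using q by (auto simp: in_set_conv_nth)
          then show False using P(1) q nth_eq_iff_index_eq[of es r q] by (simp add: hpath_def)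
        qed
        have z_new: "z \<notin> set ?vs" using znot by (auto dest: in_set_takeD)
        have "hpath F (?vs @ [z]) (?es @ [A])"
          by (rule hpath_snoc[OF path last A(3) A(1) z_new A_new])
        moreover have "(?vs @ [z]) ! 0 = x" "(?vs @ [z]) ! length (?es @ [A]) = z"
          using P(2) q len by (simp_all add: nth_append)
        ultimately show ?thesis by blast
      next
        case False
        then have "hpath F (vs @ [z]) (es @ [A])"
          using P(3) A by (intro hpath_snoc[OF P(1)]) (simp_all add: znot)
        moreover have "(vs @ [z]) ! 0 = x" "(vs @ [z]) ! length (es @ [A]) = z"
          using P(2) len by (simp_all add: nth_append)
        ultimately show ?thesis by blast
      qed
    qed
  qed
qed

lemma hconn_not_hyperforest_insert:
  assumes "(x, y) \<in> hconn F" "x \<noteq> y" "x \<in> B" "y \<in> B" "B \<notin> F"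
  shows "\<not> hyperforest (insert B F)"
proof -
  obtain vs es where P: "hpath F vs es" "vs ! 0 = x" "vs ! length es = y"
    using hconn_hpath[OF assms(1)] by blast
  have len: "length vs = Suc (length es)" and dv: "distinct vs" and de: "distinct es"
    and se: "set es \<subseteq> F" and ed: "\<And>t. t < length es \<Longrightarrow> vs ! t \<in> es ! t \<and> vs ! Suc t \<in> es ! t"
    using P(1) by (auto simp: hpath_def)
  have ne: "length es \<noteq> 0" using P(2,3) assms(2) by auto
  have cyc: "\<forall>i<length vs. vs ! i \<in> (es @ [B]) ! i \<and> vs ! ((i + 1) mod length vs) \<in> (es @ [B]) ! i"
  proof (intro allI impI)
    fix i assume i: "i < length vs"
    show "vs ! i \<in> (es @ [B]) ! i \<and> vs ! ((i + 1) mod length vs) \<in> (es @ [B]) ! i"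
    proof (cases "i < length es")
      case True
      then have "(i + 1) mod length vs = Suc i" using len by simp
      then show ?thesis using ed[OF True] True by (simp add: nth_append)
    next
      case False
      then have ie: "i = length es" using i len by simp
      then have "(i + 1) mod length vs = 0" using len by simp
      then show ?thesis using ie P(2,3) assms(3,4) by (simp add: nth_append)
    qed
  qed
  have "2 \<le> length vs" using len ne by (cases es) auto
  moreover have "distinct (es @ [B])" using de se assms(5) by auto
  moreover have "set (es @ [B]) \<subseteq> insert B F" using se by auto
  ultimately have "hcycle (insert B F) vs (es @ [B])"
    unfolding hcycle_def using len dv cyc by simp
  then show ?thesis by (auto simp: hyperforest_def)
qed

lemma mod_add_neq_self:
  fixes i d k :: nat
  assumes "i < k" "0 < d" "d < k"
  shows "(i + d) mod k \<noteq> i"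
proof (cases "i + d < k")
  case True then show ?thesis using assms by simp
next
  case False
  then have "(i + d) mod k = i + d - k" using assms by (simp add: le_mod_geq)
  then show ?thesis using assms False by linarith
qed

lemma not_hyperforest_insert_hconn:
  assumes "hyperforest F" "\<not> hyperforest (insert B F)"
  shows "\<exists>x\<in>B. \<exists>y\<in>B. x \<noteq> y \<and> (x, y) \<in> hconn F"
proof -
  obtain xs es where C: "hcycle (insert B F) xs es" using assms(2) by (auto simp: hyperforest_def)
  define k where "k = length xs"
  have len: "length es = k" and k2: "2 \<le> k" and dx: "distinct xs" and de: "distinct es"
    and se: "set es \<subseteq> insert B F"
    and ed: "\<And>i. i < k \<Longrightarrow> xs ! i \<in> es ! i \<and> xs ! ((i + 1) mod k) \<in> es ! i"
    using C by (auto simp: hcycle_def k_def)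
  have "B \<in> set es"
  proof (rule ccontr)
    assume "B \<notin> set es"
    then have "hcycle F xs es" using C by (auto simp: hcycle_def)
    then show False using assms(1) by (auto simp: hyperforest_def)
  qed
  then obtain i where i: "i < k" "es ! i = B" using len by (auto simp: in_set_conv_nth)
  define walk where "walk t = xs ! ((i + 1 + t) mod k)" for t
  have "(walk t, walk (Suc t)) \<in> hconn F" if t: "t < k - 1" for t
  proof -
    define l where "l = (i + 1 + t) mod k"
    have lk: "l < k" using k2 by (simp add: l_def)
    have "l \<noteq> i" unfolding l_def using mod_add_neq_self[of i k "Suc t"] i t by (simp add: add.assoc)
    then have "es ! l \<noteq> B" using de i lk len nth_eq_iff_index_eq[of es l i] by simp
    moreover have "es ! l \<in> set es" using lk len by simp
    ultimately have "es ! l \<in> F" using se by blast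
    then have "(xs ! l, xs ! ((l + 1) mod k)) \<in> hconn F"
      using ed[OF lk] by (blast intro: hconn_edge)
    moreover have "walk (Suc t) = xs ! ((l + 1) mod k)"
      unfolding walk_def l_def by (simp add: mod_Suc_eq)
    ultimately show ?thesis by (simp add: walk_def l_def)
  qed
  then have "(walk 0, walk (k - 1)) \<in> hconn F" by (rule hconn_chain)
  moreover have "walk (k - 1) = xs ! i" using i k2 by (simp add: walk_def)
  ultimately have "(xs ! i, xs ! ((i + 1) mod k)) \<in> hconn F" by (simp add: walk_def hconn_sym)
  moreover have "(i + 1) mod k \<noteq> i" "(i + 1) mod k < k" using mod_add_neq_self[of i k 1] i k2 by simp_all
  then have "xs ! i \<noteq> xs ! ((i + 1) mod k)" using i dx nth_eq_iff_index_eq[of xs i "(i + 1) mod k"]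
    by (simp add: k_def)
  moreover have "xs ! i \<in> B" "xs ! ((i + 1) mod k) \<in> B" using ed[OF i(1)] i(2) by simp_all
  ultimately show ?thesis by blast
qed

lemma hyperforest_insert_iff:
  assumes "hyperforest F" "B \<notin> F"
  shows "hyperforest (insert B F) \<longleftrightarrow> (\<forall>x\<in>B. \<forall>y\<in>B. (x, y) \<in> hconn F \<longrightarrow> x = y)"
proof
  assume "hyperforest (insert B F)"
  then show "\<forall>x\<in>B. \<forall>y\<in>B. (x, y) \<in> hconn F \<longrightarrow> x = y"
    using hconn_not_hyperforest_insert[OF _ _ _ _ assms(2)] by blast
next
  assume a: "\<forall>x\<in>B. \<forall>y\<in>B. (x, y) \<in> hconn F \<longrightarrow> x = y"
  show "hyperforest (insert B F)"
  proof (rule ccontr)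
    assume "\<not> hyperforest (insert B F)"
    then obtain x y where "x \<in> B" "y \<in> B" "x \<noteq> y" "(x, y) \<in> hconn F"
      using not_hyperforest_insert_hconn[OF assms(1)] by blast
    then show False using a by blast
  qed
qed

lemma finite_components: "finite V \<Longrightarrow> finite (components V F)"
  by (simp add: components_hclass)

lemma components_subset: "\<forall>A\<in>F. A \<subseteq> V \<Longrightarrow> C \<in> components V F \<Longrightarrow> C \<subseteq> V"
  by (auto simp: components_hclass dest: hclass_sub_V)

lemma components_disjoint: "C1 \<in> components V F \<Longrightarrow> C2 \<in> components V F \<Longrightarrow> C1 \<noteq> C2 \<Longrightarrow> C1 \<inter> C2 = {}"
  by (auto simp: components_hclass dest: hclass_disj)

lemma components_hconn:
  assumes "C \<in> components V F" "x \<in> C" "y \<in> C"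
  shows "(x, y) \<in> hconn F"
proof -
  obtain z where z: "C = hclass F z" using assms(1) by (auto simp: components_hclass)
  then have "(z, x) \<in> hconn F" "(z, y) \<in> hconn F" using assms by (auto simp: hclass_def)
  then show ?thesis using hconn_sym hconn_trans by meson
qed

lemma components_hconn_closed:
  assumes "C \<in> components V F" "x \<in> C" "(x, y) \<in> hconn F"
  shows "y \<in> C"
proof -
  obtain z where z: "C = hclass F z" using assms(1) by (auto simp: components_hclass)
  then have "(z, x) \<in> hconn F" using assms by (auto simp: hclass_def)
  then have "(z, y) \<in> hconn F" using assms(3) by (rule hconn_trans)
  then show ?thesis using z by (simp add: hclass_def)
qed

lemma edge_subset_component:
  assumes "A \<in> F" "C \<in> components V F" "a \<in> A" "a \<in> C"
  shows "A \<subseteq> C"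
proof
  fix y assume "y \<in> A"
  then have "(a, y) \<in> hconn F" using assms by (simp add: hconn_edge)
  then show "y \<in> C" using components_hconn_closed[OF assms(2) assms(4)] by blast
qed

lemma hyperforest_mono: "F \<subseteq> F' \<Longrightarrow> hyperforest F' \<Longrightarrow> hyperforest F"
  unfolding hyperforest_def hcycle_def by blast

lemma hconn_empty: "hconn {} = Id"
  by (simp add: hconn_hadj hadj_def)

lemma components_empty: "components V {} = (\<lambda>x. {x}) ` V"
  by (simp add: components_hclass hclass_def hconn_empty)
section \<open>Merging components\<close>

definition inner_weight :: "('v set \<Rightarrow> real) \<Rightarrow> 'v set set \<Rightarrow> 'v set \<Rightarrow> real" where
  "inner_weight c F C = (\<Sum>A\<in>{A\<in>F. A \<subseteq> C}. c A)"

definition component_product :: "('v::linorder set \<Rightarrow> real) \<Rightarrow> 'v set \<Rightarrow> 'v set set \<Rightarrow> 'v grass_even" where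
  "component_product c V F = (\<Prod>C\<in>components V F. f_ev (scalar (inner_weight c F C)) C)"

lemma Un_Union_Int_singleton:
  assumes "C \<notin> S" "\<forall>C'\<in>insert C S. finite C' \<and> card (C' \<inter> B) = 1"
    "\<forall>C1\<in>insert C S. \<forall>C2\<in>insert C S. C1 \<noteq> C2 \<longrightarrow> C1 \<inter> C2 = {}"
  obtains v where "(B \<union> \<Union>S) \<inter> C = {v}"
proof -
  obtain v where v: "C \<inter> B = {v}" using assms(2) by (metis card_1_singletonE insertI1)
  have "C \<inter> C' = {}" if "C' \<in> S" for C'
  proof -
    have "C \<noteq> C'" using assms(1) that by blast
    then show ?thesis using assms(3) that by simp
  qed
  then have "C \<inter> \<Union>S = {}" by blast
  then have "(B \<union> \<Union>S) \<inter> C = {v}" using v by blast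
  then show ?thesis by (rule that)
qed

lemma f_ev_mult_prod_merge:
  assumes "finite S" "finite B" "\<forall>C\<in>S. finite C \<and> card (C \<inter> B) = 1"
    "\<forall>C1\<in>S. \<forall>C2\<in>S. C1 \<noteq> C2 \<longrightarrow> C1 \<inter> C2 = {}"
  shows "f_ev (scalar a) B * (\<Prod>C\<in>S. f_ev (scalar (m C)) C) = f_ev (scalar (a + (\<Sum>C\<in>S. m C))) (B \<union> \<Union>S)"
  using assms(1,3,4)
proof (induction S rule: finite_induct)
  case empty then show ?case by simp
next
  case (insert C S)
  have IH: "f_ev (scalar a) B * (\<Prod>C\<in>S. f_ev (scalar (m C)) C) = f_ev (scalar (a + (\<Sum>C\<in>S. m C))) (B \<union> \<Union>S)"
    using insert by auto
  have fC: "finite C" using insert by simp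
  obtain v where int: "(B \<union> \<Union>S) \<inter> C = {v}"
    using Un_Union_Int_singleton[OF insert.hyps(2) insert.prems(1,2)] by blast
  have finU: "finite (B \<union> \<Union>S)" using insert assms(2) by auto
  have "f_ev (scalar a) B * (\<Prod>C\<in>insert C S. f_ev (scalar (m C)) C)
      = (f_ev (scalar a) B * (\<Prod>C\<in>S. f_ev (scalar (m C)) C)) * f_ev (scalar (m C)) C"
    using insert.hyps by (simp add: mult_ac)
  also have "\<dots> = f_ev (scalar (a + (\<Sum>C\<in>S. m C)) + scalar (m C)) ((B \<union> \<Union>S) \<union> C)"
    unfolding IH by (rule f_ev_mult_one_common[OF finU fC int])
  also have "scalar (a + (\<Sum>C\<in>S. m C)) + scalar (m C) = scalar (a + (\<Sum>C\<in>insert C S. m C))"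
    using insert.hyps by (simp add: scalar_add[symmetric] algebra_simps)
  also have "(B \<union> \<Union>S) \<union> C = B \<union> \<Union>(insert C S)" by auto
  finally show ?case .
qed

lemma card_Un_merge:
  assumes "finite S" "finite B" "\<forall>C\<in>S. finite C \<and> card (C \<inter> B) = 1"
    "\<forall>C1\<in>S. \<forall>C2\<in>S. C1 \<noteq> C2 \<longrightarrow> C1 \<inter> C2 = {}"
  shows "real (card (B \<union> \<Union>S)) = real (card B) + (\<Sum>C\<in>S. real (card C) - 1)"
  using assms(1,3,4)
proof (induction S rule: finite_induct)
  case empty then show ?case by simp
next
  case (insert C S)
  have IH: "real (card (B \<union> \<Union>S)) = real (card B) + (\<Sum>C\<in>S. real (card C) - 1)"
    using insert by auto
  have fC: "finite C" using insert by simp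
  obtain v where int: "(B \<union> \<Union>S) \<inter> C = {v}"
    using Un_Union_Int_singleton[OF insert.hyps(2) insert.prems(1,2)] by blast
  have finU: "finite (B \<union> \<Union>S)" using insert assms(2) by auto
  have "card ((B \<union> \<Union>S) \<union> C) + card ((B \<union> \<Union>S) \<inter> C) = card (B \<union> \<Union>S) + card C"
    using card_Un_Int[OF finU fC] by simp
  then have "real (card ((B \<union> \<Union>S) \<union> C)) = real (card (B \<union> \<Union>S)) + real (card C) - 1"
    using int by simp
  moreover have "(B \<union> \<Union>S) \<union> C = B \<union> \<Union>(insert C S)" by auto
  ultimately show ?case using IH insert.hyps by simp
qed

context
  fixes V :: "'v::linorder set" and F :: "'v set set" and B :: "'v set"
  assumes finV: "finite V" and FV: "\<forall>A\<in>F. A \<subseteq> V \<and> 2 \<le> card A"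
    and BV: "B \<subseteq> V" and B2: "2 \<le> card B" and BF: "B \<notin> F"
begin

definition touched :: "'v set set" where
  "touched = {C \<in> components V F. C \<inter> B \<noteq> {}}"
definition untouched :: "'v set set" where
  "untouched = components V F - touched"

lemma edges_subset: "\<forall>A\<in>F. A \<subseteq> V" using FV by blast

lemma finite_edges: "finite F"
proof -
  have "F \<subseteq> Pow V" using FV by blast
  then show ?thesis using finV by (simp add: finite_subset)
qed

lemma new_edge_nonempty: "B \<noteq> {}" using B2 by auto
lemma finite_new_edge: "finite B" using BV finV finite_subset by blast

lemma finite_touched: "finite touched" using finite_components[OF finV] by (simp add: touched_def)

lemma touched_subset: "touched \<subseteq> components V F" by (auto simp: touched_def)

lemma components_split: "components V F = touched \<union> untouched" "touched \<inter> untouched = {}"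
  by (auto simp: touched_def untouched_def)

lemma new_edge_subset_touched: "B \<subseteq> \<Union>touched"
proof
  fix b assume b: "b \<in> B"
  then have "hclass F b \<in> touched" using BV hclass_self[of b F] by (auto simp: touched_def hclass_in_components)
  then show "b \<in> \<Union>touched" using hclass_self[of b F] by blast
qed

lemma components_insert_touched: "components V (insert B F) = insert (\<Union>touched) untouched"
  using components_insert[OF BV new_edge_nonempty] by (simp add: touched_def untouched_def)

lemma Union_touched_notin_untouched: "\<Union>touched \<notin> untouched"
proof
  assume "\<Union>touched \<in> untouched"
  then have "\<Union>touched \<inter> B = {}" by (auto simp: untouched_def touched_def)
  then show False using new_edge_subset_touched new_edge_nonempty by blast
qed

lemma touched_disjoint: "C1 \<in> touched \<Longrightarrow> C2 \<in> touched \<Longrightarrow> C1 \<noteq> C2 \<Longrightarrow> C1 \<inter> C2 = {}"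
  using components_disjoint touched_subset by blast

lemma inner_weight_untouched: "D \<in> untouched \<Longrightarrow> inner_weight c (insert B F) D = inner_weight c F D"
proof -
  assume D: "D \<in> untouched"
  then have "D \<inter> B = {}" by (auto simp: untouched_def touched_def)
  then have "\<not> B \<subseteq> D" using new_edge_nonempty by blast
  then have "{A \<in> insert B F. A \<subseteq> D} = {A \<in> F. A \<subseteq> D}" by auto
  then show ?thesis by (simp add: inner_weight_def)
qed

lemma inner_weight_Union_touched: "inner_weight c (insert B F) (\<Union>touched) = c B + (\<Sum>C\<in>touched. inner_weight c F C)"
proof -
  have eq: "{A \<in> insert B F. A \<subseteq> \<Union>touched} = insert B (\<Union>C\<in>touched. {A \<in> F. A \<subseteq> C})"
  proof (intro equalityI subsetI)
    fix A assume A: "A \<in> {A \<in> insert B F. A \<subseteq> \<Union>touched}"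
    show "A \<in> insert B (\<Union>C\<in>touched. {A \<in> F. A \<subseteq> C})"
    proof (cases "A = B")
      case False
      then have AF: "A \<in> F" "A \<subseteq> \<Union>touched" using A by auto
      then have "A \<noteq> {}" using FV by fastforce
      then obtain a where a: "a \<in> A" by blast
      then obtain C where C: "C \<in> touched" "a \<in> C" using AF by blast
      then have "A \<subseteq> C" using edge_subset_component[OF AF(1) _ a] touched_subset by blast
      then show ?thesis using C AF by blast
    qed simp
  next
    fix A assume "A \<in> insert B (\<Union>C\<in>touched. {A \<in> F. A \<subseteq> C})"
    then show "A \<in> {A \<in> insert B F. A \<subseteq> \<Union>touched}" using new_edge_subset_touched by auto
  qed
  have fin: "finite (\<Union>C\<in>touched. {A \<in> F. A \<subseteq> C})" by (rule finite_subset[OF _ finite_edges]) auto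
  have Bnot: "B \<notin> (\<Union>C\<in>touched. {A \<in> F. A \<subseteq> C})" using BF by auto
  have disj: "\<forall>C1\<in>touched. \<forall>C2\<in>touched. C1 \<noteq> C2 \<longrightarrow> {A \<in> F. A \<subseteq> C1} \<inter> {A \<in> F. A \<subseteq> C2} = {}"
  proof (intro ballI impI)
    fix C1 C2 assume C: "C1 \<in> touched" "C2 \<in> touched" "C1 \<noteq> C2"
    then have d: "C1 \<inter> C2 = {}" by (rule touched_disjoint)
    show "{A \<in> F. A \<subseteq> C1} \<inter> {A \<in> F. A \<subseteq> C2} = {}"
    proof (rule ccontr)
      assume "{A \<in> F. A \<subseteq> C1} \<inter> {A \<in> F. A \<subseteq> C2} \<noteq> {}"
      then obtain A where "A \<in> F" "A \<subseteq> C1" "A \<subseteq> C2" by blast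
      moreover have "A \<noteq> {}" using FV \<open>A \<in> F\<close> by fastforce
      ultimately show False using d by blast
    qed
  qed
  have "inner_weight c (insert B F) (\<Union>touched) = c B + (\<Sum>A\<in>(\<Union>C\<in>touched. {A \<in> F. A \<subseteq> C}). c A)"
    unfolding inner_weight_def eq using fin Bnot by simp
  also have "(\<Sum>A\<in>(\<Union>C\<in>touched. {A \<in> F. A \<subseteq> C}). c A) = (\<Sum>C\<in>touched. inner_weight c F C)"
    unfolding inner_weight_def using finite_touched finite_edges disj by (subst sum.UNION_disjoint) auto
  finally show ?thesis .
qed

lemma card_touched_Int_new_edge:
  assumes "hyperforest F" "hyperforest (insert B F)" "C \<in> touched"
  shows "card (C \<inter> B) = 1"
proof -
  have ne: "C \<inter> B \<noteq> {}" using assms(3) by (simp add: touched_def)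
  have "x = y" if "x \<in> C \<inter> B" "y \<in> C \<inter> B" for x y
  proof -
    have "C \<in> components V F" using touched_subset assms(3) by blast
    then have "(x, y) \<in> hconn F" using components_hconn[of C V F x y] that by blast
    then show "x = y" using hyperforest_insert_iff[OF assms(1) BF] assms(2) that by blast
  qed
  then obtain x where "C \<inter> B = {x}" using ne by blast
  then show ?thesis by simp
qed

lemma finite_touched_member: "C \<in> touched \<Longrightarrow> finite C"
  using touched_subset components_subset[OF edges_subset] finV finite_subset by blast

lemma touched_merge_conditions:
  assumes "hyperforest F" "hyperforest (insert B F)"
  shows "\<forall>C\<in>touched. finite C \<and> card (C \<inter> B) = 1"
    "\<forall>C1\<in>touched. \<forall>C2\<in>touched. C1 \<noteq> C2 \<longrightarrow> C1 \<inter> C2 = {}"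
  using finite_touched_member card_touched_Int_new_edge[OF assms] touched_disjoint by auto

lemma component_product_split:
  "component_product c V F = (\<Prod>C\<in>touched. f_ev (scalar (inner_weight c F C)) C)
     * (\<Prod>C\<in>untouched. f_ev (scalar (inner_weight c F C)) C)"
proof -
  have "finite untouched" using finite_components[OF finV] by (simp add: untouched_def)
  then show ?thesis
    unfolding component_product_def components_split(1)
    by (rule prod.union_disjoint[OF finite_touched _ components_split(2)])
qed

lemma component_product_insert:
  "component_product c V (insert B F) = f_ev (scalar (c B + (\<Sum>C\<in>touched. inner_weight c F C))) (B \<union> \<Union>touched)
     * (\<Prod>C\<in>untouched. f_ev (scalar (inner_weight c F C)) C)"
proof -
  have "finite untouched" using finite_components[OF finV] by (simp add: untouched_def)
  then have "component_product c V (insert B F)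
      = f_ev (scalar (inner_weight c (insert B F) (\<Union>touched))) (\<Union>touched)
        * (\<Prod>C\<in>untouched. f_ev (scalar (inner_weight c (insert B F) C)) C)"
    unfolding component_product_def components_insert_touched using Union_touched_notin_untouched by simp
  moreover have "B \<union> \<Union>touched = \<Union>touched" using new_edge_subset_touched by blast
  ultimately show ?thesis
    by (simp add: inner_weight_Union_touched inner_weight_untouched cong: prod.cong)
qed

text \<open>If \<open>F \<union> {B}\<close> is a hyperforest, \<open>B\<close> meets every component it touches in exactly one
  vertex, so \<open>f_ev_mult_one_common\<close> merges them; otherwise two vertices of \<open>B\<close> lie in one
  component \<open>C\<close> and the factor of \<open>C\<close> is annihilated by \<open>f_ev_mult_two_common\<close>.\<close>

lemma f_ev_mult_component_product:
  assumes hf: "hyperforest F"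
  shows "f_ev (scalar (c B)) B * component_product c V F
    = (if hyperforest (insert B F) then component_product c V (insert B F) else 0)"
proof (cases "hyperforest (insert B F)")
  case True
  have "f_ev (scalar (c B)) B * (\<Prod>C\<in>touched. f_ev (scalar (inner_weight c F C)) C)
      = f_ev (scalar (c B + (\<Sum>C\<in>touched. inner_weight c F C))) (B \<union> \<Union>touched)"
    by (rule f_ev_mult_prod_merge[OF finite_touched finite_new_edge touched_merge_conditions[OF hf True]])
  then show ?thesis
    using True by (simp add: component_product_split component_product_insert mult.assoc[symmetric])
next
  case False
  let ?h = "\<lambda>C. f_ev (scalar (inner_weight c F C)) C"
  obtain x y where xy: "x \<in> B" "y \<in> B" "x \<noteq> y" "(x, y) \<in> hconn F"
    using False hyperforest_insert_iff[OF hf BF] by blast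
  define C where "C = hclass F x"
  have "C \<in> components V F" using xy BV by (simp add: C_def hclass_in_components subset_iff)
  moreover have xC: "x \<in> C" and yC: "y \<in> C" using xy by (simp_all add: C_def hclass_def)
  ultimately have C_touched: "C \<in> touched" using xy by (auto simp: touched_def)
  have zero: "f_ev (scalar (c B)) B * ?h C = 0"
    by (rule f_ev_mult_two_common[OF finite_new_edge finite_touched_member[OF C_touched] xy(1,2) xC yC xy(3)])
  have "(\<Prod>C\<in>touched. ?h C) = ?h C * (\<Prod>C\<in>touched - {C}. ?h C)"
    using finite_touched C_touched by (rule prod.remove)
  then have "f_ev (scalar (c B)) B * component_product c V F
      = (f_ev (scalar (c B)) B * ?h C) * ((\<Prod>C\<in>touched - {C}. ?h C) * (\<Prod>C\<in>untouched. ?h C))"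
    unfolding component_product_split by (simp add: mult_ac)
  then show ?thesis using False zero by simp
qed

end

lemma inner_weight_card:
  fixes V :: "'v::linorder set"
  assumes "finite V" "finite F" "\<forall>A\<in>F. A \<subseteq> V \<and> 2 \<le> card A" "hyperforest F" "C \<in> components V F"
  shows "inner_weight (\<lambda>A. real (card A) - 1) F C = real (card C) - 1"
  using assms(2-5)
proof (induction F arbitrary: C rule: finite_induct)
  case empty
  then obtain x where "C = {x}" by (auto simp: components_empty)
  then show ?case by (simp add: inner_weight_def)
next
  case (insert B F)
  let ?c = "\<lambda>A. real (card A) - 1"
  have FV: "\<forall>A\<in>F. A \<subseteq> V \<and> 2 \<le> card A" and BV: "B \<subseteq> V" and B2: "2 \<le> card B"
    using insert.prems by auto
  have hf: "hyperforest F" using hyperforest_mono[OF _ insert.prems(2)] by blast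
  note ctx = assms(1) FV BV B2 insert.hyps(2)
  have IH: "\<And>C. C \<in> components V F \<Longrightarrow> inner_weight ?c F C = real (card C) - 1"
    using insert.IH[OF FV hf] by blast
  have "C \<in> insert (\<Union>(touched V F B)) (untouched V F B)"
    using insert.prems(3) components_insert_touched[OF ctx] by simp
  then show ?case
  proof
    assume CU: "C = \<Union>(touched V F B)"
    have "inner_weight ?c (insert B F) C = ?c B + (\<Sum>C'\<in>touched V F B. inner_weight ?c F C')"
      unfolding CU by (rule inner_weight_Union_touched[OF ctx])
    also have "(\<Sum>C'\<in>touched V F B. inner_weight ?c F C') = (\<Sum>C'\<in>touched V F B. real (card C') - 1)"
      using IH touched_subset[OF ctx] by (intro sum.cong) auto
    also have "?c B + (\<Sum>C'\<in>touched V F B. real (card C') - 1) = real (card (B \<union> \<Union>(touched V F B))) - 1"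
    proof -
      have "real (card (B \<union> \<Union>(touched V F B))) = real (card B) + (\<Sum>C'\<in>touched V F B. real (card C') - 1)"
        by (rule card_Un_merge[OF finite_touched[OF ctx] finite_new_edge[OF ctx]
              touched_merge_conditions[OF ctx hf insert.prems(2)]])
      then show ?thesis by simp
    qed
    also have "B \<union> \<Union>(touched V F B) = C" using new_edge_subset_touched[OF ctx] CU by blast
    finally show ?thesis .
  next
    assume CO: "C \<in> untouched V F B"
    then have "C \<in> components V F" by (simp add: untouched_def[OF ctx])
    then show ?thesis using inner_weight_untouched[OF ctx CO] IH by simp
  qed
qed

section \<open>The hyperforest expansion\<close>

definition generators :: "'v set \<Rightarrow> ('v \<times> bool) set" where
  "generators V = V \<times> UNIV"

lemma degree_at_least_scalar: "degree_at_least G 0 (scalar r)"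
  by (simp add: degree_at_least_def scalar.rep_eq gscale_def gone_def)

lemma degree_at_least_tau_ev:
  assumes "finite S" "S \<subseteq> V"
  shows "degree_at_least (generators V) (card S) (tau_ev S)"
  using assms
proof (induction S rule: finite_induct)
  case empty then show ?case by (simp add: degree_at_least_one)
next
  case (insert v S)
  have "degree_at_least (generators V) 2 (psibar_psi v v)"
    using insert.prems by (intro degree_at_least_psibar_psi) (auto simp: generators_def)
  moreover have "degree_at_least (generators V) (card S) (tau_ev S)" using insert by simp
  ultimately have "degree_at_least (generators V) (2 + card S) (psibar_psi v v * tau_ev S)"
    by (rule degree_at_least_mult)
  then have "degree_at_least (generators V) (card (insert v S)) (psibar_psi v v * tau_ev S)"
    by (rule degree_at_least_mono) (use insert.hyps in simp)
  then show ?case using insert.hyps by (simp add: tau_ev_insert)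
qed

lemma degree_at_least_f_ev:
  assumes "A \<subseteq> V" "2 \<le> card A"
  shows "degree_at_least (generators V) 1 (f_ev (scalar r) A)"
proof -
  have fA: "finite A" using assms(2) card.infinite by force
  have tau: "degree_at_least (generators V) (card S) (tau_ev S)" if "S \<subseteq> A" for S
    using that fA assms(1) by (intro degree_at_least_tau_ev) (auto intro: finite_subset)
  have "degree_at_least (generators V) (0 + card A) (scalar r * tau_ev A)"
    by (rule degree_at_least_mult[OF degree_at_least_scalar tau]) simp
  then have 1: "degree_at_least (generators V) 1 (scalar r * tau_ev A)"
    by (rule degree_at_least_mono) (use assms(2) in simp)
  have 2: "degree_at_least (generators V) 1 (sigma_ev A)"
    unfolding sigma_ev_def
  proof (rule degree_at_least_sum)
    fix i assume "i \<in> A"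
    then have "1 \<le> card (A - {i})" using assms(2) fA by simp
    then show "degree_at_least (generators V) 1 (tau_ev (A - {i}))"
      using tau[of "A - {i}"] by (auto intro: degree_at_least_mono)
  qed
  have 3: "degree_at_least (generators V) 1 (rho_ev A)"
    unfolding rho_ev_def
  proof (intro degree_at_least_sum)
    fix i j assume ij: "i \<in> A" "j \<in> A - {i}"
    have "degree_at_least (generators V) 2 (psibar_psi i j)"
      using ij assms(1) by (intro degree_at_least_psibar_psi) (auto simp: generators_def)
    then have "degree_at_least (generators V) (2 + card (A - {i, j})) (psibar_psi i j * tau_ev (A - {i, j}))"
      using degree_at_least_mult tau[of "A - {i, j}"] by blast
    then show "degree_at_least (generators V) 1 (psibar_psi i j * tau_ev (A - {i, j}))"
      by (auto intro: degree_at_least_mono)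
  qed
  show ?thesis unfolding f_ev_def using 1 2 3
    by (intro degree_at_least_add degree_at_least_diff degree_at_least_uminus)
qed

lemma degree_at_least_sum_f_ev:
  assumes "\<forall>A\<in>E. A \<subseteq> V \<and> 2 \<le> card A"
  shows "degree_at_least (generators V) 1 (\<Sum>A\<in>E. scalar (w A) * f_ev (scalar (c A)) A)"
proof (rule degree_at_least_sum)
  fix A assume "A \<in> E"
  then show "degree_at_least (generators V) 1 (scalar (w A) * f_ev (scalar (c A)) A)"
    using assms by (intro degree_at_least_scalar_mult degree_at_least_f_ev) auto
qed

lemma sum_f_ev_power_eq_0:
  assumes "finite V" "\<forall>A\<in>E. A \<subseteq> V \<and> 2 \<le> card A"
  shows "(\<Sum>A\<in>E. scalar (w A) * f_ev (scalar (c A)) A) ^ Suc (card (generators V)) = 0"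
proof (rule degree_at_least_card_eq_0)
  show "finite (generators V)" using assms(1) by (simp add: generators_def)
  show "degree_at_least (generators V) (Suc (card (generators V)))
      ((\<Sum>A\<in>E. scalar (w A) * f_ev (scalar (c A)) A) ^ Suc (card (generators V)))"
    by (rule degree_at_least_pow[OF degree_at_least_sum_f_ev[OF assms(2)]])
qed simp

lemma f_ev_square:
  assumes "finite B" "2 \<le> card B"
  shows "f_ev c B * f_ev c B = 0"
proof -
  obtain u where u: "u \<in> B" using assms(2) by fastforce
  have "card (B - {u}) \<ge> 1" using assms u by simp
  then obtain v where "v \<in> B - {u}" by (metis card.empty ex_in_conv not_one_le_zero)
  then have "u \<in> B" "v \<in> B" "u \<noteq> v" using u by auto
  then show ?thesis using f_ev_mult_two_common[OF assms(1) assms(1)] by blast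
qed

lemma spanning_hyperforests_empty: "spanning_hyperforests {} = {{}}"
  by (auto simp: spanning_hyperforests_def hyperforest_def hcycle_def)

lemma finite_spanning_hyperforests: "finite E \<Longrightarrow> finite (spanning_hyperforests E)"
  by (rule finite_subset[of _ "Pow E"]) (auto simp: spanning_hyperforests_def)

lemma spanning_hyperforests_insert:
  assumes "B \<notin> E"
  shows "spanning_hyperforests (insert B E) =
    spanning_hyperforests E \<union> insert B ` {F \<in> spanning_hyperforests E. hyperforest (insert B F)}"
proof (intro equalityI subsetI)
  fix F assume F: "F \<in> spanning_hyperforests (insert B E)"
  show "F \<in> spanning_hyperforests E \<union> insert B ` {F \<in> spanning_hyperforests E. hyperforest (insert B F)}"
  proof (cases "B \<in> F")
    case True
    have "F - {B} \<subseteq> E" "hyperforest (F - {B})" and ins: "insert B (F - {B}) = F"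
      using F True hyperforest_mono[of "F - {B}" F] by (auto simp: spanning_hyperforests_def)
    moreover have "hyperforest F" using F by (simp add: spanning_hyperforests_def)
    ultimately have "F - {B} \<in> {F \<in> spanning_hyperforests E. hyperforest (insert B F)}"
      by (simp add: spanning_hyperforests_def)
    then have "insert B (F - {B}) \<in> insert B ` {F \<in> spanning_hyperforests E. hyperforest (insert B F)}"
      by (rule imageI)
    then show ?thesis unfolding ins by blast
  next
    case False
    then show ?thesis using F by (auto simp: spanning_hyperforests_def)
  qed
next
  fix F assume "F \<in> spanning_hyperforests E \<union> insert B ` {F \<in> spanning_hyperforests E. hyperforest (insert B F)}"
  then show "F \<in> spanning_hyperforests (insert B E)" by (auto simp: spanning_hyperforests_def)
qed

lemma component_product_empty: "component_product c V {} = 1"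
proof -
  have "\<And>x. f_ev (scalar (inner_weight c {} {x})) {x} = 1"
    by (simp add: inner_weight_def f_ev_singleton)
  then show ?thesis by (simp add: component_product_def components_empty prod.reindex)
qed

lemma sum_spanning_hyperforests_insert:
  fixes w c :: "'v::linorder set \<Rightarrow> real"
  assumes "finite V" "finite E" "B \<notin> E" "\<forall>A\<in>insert B E. A \<subseteq> V \<and> 2 \<le> card A"
  defines "g \<equiv> \<lambda>F. scalar (\<Prod>A\<in>F. w A) * component_product c V F"
  shows "(1 + scalar (w B) * f_ev (scalar (c B)) B) * (\<Sum>F\<in>spanning_hyperforests E. g F)
    = (\<Sum>F\<in>spanning_hyperforests (insert B E). g F)"
proof -
  let ?SF = "spanning_hyperforests E"
  let ?G = "{F \<in> ?SF. hyperforest (insert B F)}"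
  have "scalar (w B) * f_ev (scalar (c B)) B * g F
      = (if hyperforest (insert B F) then g (insert B F) else 0)" if F: "F \<in> ?SF" for F
  proof -
    have FE: "F \<subseteq> E" and hf: "hyperforest F" using F by (auto simp: spanning_hyperforests_def)
    have BF: "B \<notin> F" using FE assms(3) by blast
    have "scalar (w B) * f_ev (scalar (c B)) B * g F
        = scalar (w B * (\<Prod>A\<in>F. w A)) * (f_ev (scalar (c B)) B * component_product c V F)"
      by (simp add: g_def scalar_mult mult_ac)
    also have "f_ev (scalar (c B)) B * component_product c V F
        = (if hyperforest (insert B F) then component_product c V (insert B F) else 0)"
      using FE assms(4) by (intro f_ev_mult_component_product[OF assms(1) _ _ _ BF hf]) auto
    also have "w B * (\<Prod>A\<in>F. w A) = (\<Prod>A\<in>insert B F. w A)"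
      using finite_subset[OF FE assms(2)] BF by simp
    finally show ?thesis by (simp add: g_def)
  qed
  then have "scalar (w B) * f_ev (scalar (c B)) B * (\<Sum>F\<in>?SF. g F) = (\<Sum>F\<in>?G. g (insert B F))"
    by (simp add: sum_distrib_left sum.inter_filter finite_spanning_hyperforests assms(2)
        cong: sum.cong)
  also have "\<dots> = (\<Sum>F\<in>insert B ` ?G. g F)"
    by (rule sum.reindex[symmetric, unfolded comp_def])
      (use assms(3) in \<open>auto simp: inj_on_def spanning_hyperforests_def\<close>)
  finally have "(1 + scalar (w B) * f_ev (scalar (c B)) B) * (\<Sum>F\<in>?SF. g F)
      = (\<Sum>F\<in>?SF. g F) + (\<Sum>F\<in>insert B ` ?G. g F)"
    by (simp add: distrib_right)
  also have "\<dots> = (\<Sum>F\<in>spanning_hyperforests (insert B E). g F)"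
    unfolding spanning_hyperforests_insert[OF assms(3)]
    by (rule sum.union_disjoint[symmetric])
      (use assms(2,3) finite_spanning_hyperforests in \<open>auto simp: spanning_hyperforests_def\<close>)
  finally show ?thesis .
qed

lemma exp_trunc_0: "exp_trunc N 0 = 1"
proof -
  have "exp_trunc N 0 = (\<Sum>n\<le>N. if n = 0 then 1 else 0)"
    unfolding exp_trunc_def by (rule sum.cong) (auto simp: power_0_left)
  then show ?thesis by simp
qed

text \<open>Each summand squares to zero and the sum is nilpotent of order \<open>Suc (card (generators V))\<close>,
  so the truncated exponential factors as \<open>\<Prod>\<^sub>A (1 + w\<^sub>A f(A))\<close>.\<close>

lemma exp_trunc_sum_f_ev:
  fixes V :: "'v::linorder set" and E :: "'v set set" and w c :: "'v set \<Rightarrow> real"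
  assumes "finite V" "finite E" "\<forall>A\<in>E. A \<subseteq> V \<and> 2 \<le> card A"
  shows "exp_trunc (Suc (card (generators V))) (\<Sum>A\<in>E. scalar (w A) * f_ev (scalar (c A)) A)
     = (\<Sum>F\<in>spanning_hyperforests E. scalar (\<Prod>A\<in>F. w A) * component_product c V F)"
  using assms(2,3)
proof (induction E rule: finite_induct)
  case empty
  then show ?case by (simp add: spanning_hyperforests_empty component_product_empty exp_trunc_0)
next
  case (insert B E)
  let ?x = "scalar (w B) * f_ev (scalar (c B)) B"
  have B: "finite B" "2 \<le> card B" using insert.prems assms(1) finite_subset by auto
  have "?x * ?x = 0" by (simp add: f_ev_square[OF B] mult_ac)
  moreover have "(\<Sum>A\<in>E. scalar (w A) * f_ev (scalar (c A)) A) ^ Suc (card (generators V)) = 0"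
    using insert.prems by (intro sum_f_ev_power_eq_0[OF assms(1)]) simp
  ultimately have "exp_trunc (Suc (card (generators V))) ((\<Sum>A\<in>E. scalar (w A) * f_ev (scalar (c A)) A) + ?x)
      = (1 + ?x) * exp_trunc (Suc (card (generators V))) (\<Sum>A\<in>E. scalar (w A) * f_ev (scalar (c A)) A)"
    by (rule exp_trunc_add_square_zero)
  then show ?case
    using insert sum_spanning_hyperforests_insert[OF assms(1) insert.hyps(1,2) insert.prems, of w c]
    by (simp add: add.commute)
qed

lemma lam_avg_mult_card:
  fixes V :: "'v::linorder set"
  assumes finV: "finite V" and EV: "\<forall>A\<in>E. A \<subseteq> V \<and> 2 \<le> card A"
    and F: "F \<in> spanning_hyperforests E" and C: "C \<in> components V F"
  shows "lam_avg lams F C * (real (card C) - 1) = inner_weight (\<lambda>A. lams A * (real (card A) - 1)) F C"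
proof -
  have FE: "F \<subseteq> E" and hf: "hyperforest F" using F by (auto simp: spanning_hyperforests_def)
  have FV: "\<forall>A\<in>F. A \<subseteq> V \<and> 2 \<le> card A" using FE EV by blast
  have finite_edges: "finite F" by (rule finite_subset[of _ "Pow V"]) (use FV finV in auto)
  let ?S = "{A \<in> F. A \<subseteq> C}"
  have finS: "finite ?S" using finite_edges by simp
  have den: "(\<Sum>A\<in>?S. real (card A) - 1) = real (card C) - 1"
    using inner_weight_card[OF finV finite_edges FV hf C] by (simp add: inner_weight_def)
  have num: "(\<Sum>A\<in>?S. (real (card A) - 1) * lams A) = inner_weight (\<lambda>A. lams A * (real (card A) - 1)) F C"
    by (simp add: inner_weight_def mult.commute)
  show ?thesis
  proof (cases "real (card C) - 1 = 0")
    case True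
    have no_edges: "?S = {}"
    proof (rule ccontr)
      assume "?S \<noteq> {}"
      then obtain A0 where A0: "A0 \<in> ?S" by blast
      have "(\<Sum>A\<in>?S. real (card A) - 1) \<ge> real (card A0) - 1"
        by (rule member_le_sum[OF A0]) (use FV finS in auto)
      moreover have "real (card A0) - 1 \<ge> 1" using A0 FV by auto
      ultimately show False using den True by simp
    qed
    show ?thesis unfolding inner_weight_def no_edges using True by simp
  next
    case False
    then show ?thesis unfolding lam_avg_def den num by simp
  qed
qed

lemma gprod_set_cong:
  assumes "finite S" "\<And>C. C \<in> S \<Longrightarrow> f C = g C"
  shows "gprod_set S f = gprod_set S g"
proof -
  define xs where "xs = (SOME xs. distinct xs \<and> set xs = S)"
  have "\<exists>xs. distinct xs \<and> set xs = S" using assms(1) finite_distinct_list by blast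
  then have "set xs = S" unfolding xs_def by (metis (mono_tags, lifting) someI_ex)
  then have "map f xs = map g xs" using assms(2) by simp
  then show ?thesis unfolding gprod_set_def xs_def[symmetric] by (rule arg_cong)
qed

lemma gexp_sum_fA_hyperforests:
  fixes V :: "'v::linorder set" and E :: "'v set set" and w lams :: "'v set \<Rightarrow> real"
  assumes "finite V" "\<forall>A\<in>E. A \<subseteq> V \<and> 2 \<le> card A"
  shows "gexp (\<Sum>A\<in>E. gscale (w A) (fA (lams A) A))
    = (\<Sum>F\<in>spanning_hyperforests E.
         gscale (\<Prod>A\<in>F. w A) (gprod_set (components V F) (\<lambda>C. fA (lam_avg lams F C) C)))"
proof -
  define c where "c = (\<lambda>A. lams A * (real (card A) - 1))"
  let ?s = "\<Sum>A\<in>E. scalar (w A) * f_ev (scalar (c A)) A"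
  have "finite E" by (rule finite_subset[of _ "Pow V"]) (use assms in auto)
  have "(\<Sum>A\<in>E. gscale (w A) (fA (lams A) A)) = grass_of ?s"
    by (simp add: grass_of_sum grass_of_scalar_mult fA_eq_grass_of c_def)
  moreover have "gexp (grass_of ?s) = grass_of (exp_trunc (Suc (card (generators V))) ?s)"
    using assms by (intro gexp_grass_of[of "generators V"] degree_at_least_sum_f_ev)
      (simp_all add: generators_def)
  moreover have "gprod_set (components V F) (\<lambda>C. fA (lam_avg lams F C) C) = grass_of (component_product c V F)"
    if "F \<in> spanning_hyperforests E" for F
    unfolding component_product_def using assms(1) finite_components
    by (intro gprod_set_eq_grass_of) (simp_all add: fA_eq_grass_of lam_avg_mult_card[OF assms that] c_def)
  ultimately show ?thesis
    using exp_trunc_sum_f_ev[OF assms(1) \<open>finite E\<close> assms(2), of w c]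
    by (simp add: grass_of_sum grass_of_scalar_mult)
qed

text \<open>For a constant \<open>\<lambda>\<close> the average is \<open>\<lambda>\<close> again, except on isolated vertices, where it is
  \<open>0 / 0 = 0\<close>; there \<open>fA\<close> does not depend on the parameter.\<close>

lemma fA_lam_avg_const:
  assumes "finite V" "\<forall>A\<in>E. A \<subseteq> V \<and> 2 \<le> card A"
    and "F \<in> spanning_hyperforests E" "C \<in> components V F"
  shows "fA (lam_avg (\<lambda>_. lam) F C) C = fA lam C"
proof -
  have "F \<subseteq> E" "hyperforest F" using assms(3) by (auto simp: spanning_hyperforests_def)
  moreover have "finite F" by (rule finite_subset[of _ "Pow V"]) (use \<open>F \<subseteq> E\<close> assms(1,2) in auto)
  ultimately have "inner_weight (\<lambda>A. real (card A) - 1) F C = real (card C) - 1"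
    using assms(2,4) by (intro inner_weight_card[OF assms(1)]) auto
  then have avg: "lam_avg (\<lambda>_. lam) F C * (real (card C) - 1) = lam * (real (card C) - 1)"
    using lam_avg_mult_card[OF assms] by (simp add: inner_weight_def flip: sum_distrib_left)
  show ?thesis unfolding fA_eq_grass_of avg ..
qed

theorem corollary4p5:
  fixes V :: "'v::linorder set" and E :: "'v set set"
    and w :: "'v set \<Rightarrow> real" and lam :: real and lams :: "'v set \<Rightarrow> real"
  assumes "finite V"
    and "\<forall>A\<in>E. A \<subseteq> V \<and> 2 \<le> card A"
  shows "gexp (\<Sum>A\<in>E. gscale (w A) (fA lam A))
           = (\<Sum>F\<in>spanning_hyperforests E.
                gscale (\<Prod>A\<in>F. w A) (gprod_set (components V F) (\<lambda>C. fA lam C)))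
       \<and> gexp (\<Sum>A\<in>E. gscale (w A) (fA (lams A) A))
           = (\<Sum>F\<in>spanning_hyperforests E.
                gscale (\<Prod>A\<in>F. w A) (gprod_set (components V F) (\<lambda>C. fA (lam_avg lams F C) C)))"
proof
  have "gprod_set (components V F) (\<lambda>C. fA (lam_avg (\<lambda>_. lam) F C) C)
      = gprod_set (components V F) (\<lambda>C. fA lam C)" if "F \<in> spanning_hyperforests E" for F
    using finite_components[OF assms(1)] fA_lam_avg_const[OF assms that] by (rule gprod_set_cong)
  then show "gexp (\<Sum>A\<in>E. gscale (w A) (fA lam A))
      = (\<Sum>F\<in>spanning_hyperforests E. gscale (\<Prod>A\<in>F. w A) (gprod_set (components V F) (\<lambda>C. fA lam C)))"
    unfolding gexp_sum_fA_hyperforests[OF assms, of w "\<lambda>_. lam"] by (intro sum.cong) simp_all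
  show "gexp (\<Sum>A\<in>E. gscale (w A) (fA (lams A) A))
      = (\<Sum>F\<in>spanning_hyperforests E.
           gscale (\<Prod>A\<in>F. w A) (gprod_set (components V F) (\<lambda>C. fA (lam_avg lams F C) C)))"
    by (rule gexp_sum_fA_hyperforests[OF assms])
qed

end
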